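(* Let $0<r<q-1$, $r=r_0+r_1p+\dots+r_{f-1}p^{f-1}$ with $0\le r_j\le p-1$. Let $n\ge1$, $0\le i_j\le q-1$ for $0\le j\le n-1$, and write $i_{n-1}=i_{n-1,0}+i_{n-1,1}p+\dots+i_{n-1,f-1}p^{f-1}$ with $0\le i_{n-1,j}\le p-1$. Then: (1) $\sum_{\mu_0\in\mathbb F_q}\cdots\sum_{\mu_{n-1}\in\mathbb F_q}\mu_0^{i_0}\cdots\mu_{n-1}^{i_{n-1}}\left[\begin{pmatrix}\varpi^n&\mu\\0&1\end{pmatrix},1\right]\in\mathrm{Ker}\,T_{1,2}$ if and only if either $0\le i_{n-1}\le q-2-r$, or $i_{n-1}>q-1-r$ and $i_{n-1,j}<p-1-r_j$ for some $0\le j\le f-2$; (2) $\sum_{\mu_0}\cdots\sum_{\mu_{n-1}}\mu_0^{i_0}\cdots\mu_{n-1}^{i_{n-1}}\left[\begin{pmatrix}\varpi^{n-1}&[\mu]_{n-1}\\0&1\end{pmatrix}\begin{pmatrix}1&[\mu_{n-1}]\\0&1\end{pmatrix}w,1\right]\in\mathrm{Ker}\,T_{-1,0}$ if and only if either $0\le i_{n-1}\le r-1$, or $i_{n-1}>r$ and $i_{n-1,j}<r_j$ for some $0\le j\le f-2$. Here $\mu=[\mu_0]+[\mu_1]\varpi+\dots+[\mu_{n-1}]\varpi^{n-1}$.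
   Context: $F$ is a finite extension of $\mathbb Q_p$ with ring of integers $\mathcal O$, uniformizer $\varpi$, residue field $\mathbb F_q$, $q=p^f$; $[x]$ is the multiplicative representative of $x\in\mathbb F_q$; $\bar a$ the reduction of $a\in\mathcal O$; convention $0^0=1$. $G=\mathrm{GL}_2(F)$, $K=\mathrm{GL}_2(\mathcal O)$, $Z$ the centre, $I$ the Iwahori subgroup of $K$ (lower-left entry in $\varpi\mathcal O$). $\chi_r:IZ\to\overline{\mathbb F}_p^\times$, $\begin{pmatrix} a&b\\ \varpi c&d\end{pmatrix}\mapsto\bar d^{\,r}$, $\mathrm{diag}(\varpi,\varpi)\mapsto1$; $\mathrm{ind}_{IZ}^G\chi_r$ is the compact induction and $[g,1]$ the element supported on $IZg^{-1}$ with value $1$ at $g^{-1}$. $\beta=\begin{pmatrix}0&1\\ \varpi&0\end{pmatrix}$, $w=\begin{pmatrix}0&1\\1&0\end{pmatrix}$, $I_1=\{[\lambda]:\lambda\in\mathbb F_q\}$; $T_{-1,0},T_{1,2}$ are the $G$-endomorphisms with $T_{-1,0}[g,1]=\sum_{\lambda\in I_1}[g\begin{pmatrix}\varpi&\lambda\\0&1\end{pmatrix},1]$ and $T_{1,2}[g,1]=\sum_{\lambda\in I_1}[g\beta\begin{pmatrix}1&\lambda\\0&1\end{pmatrix}w,1]$. For $\mu$ as in the claim, $[\mu]_{n-1}=\sum_{i<n-1}[\mu_i]\varpi^i$. *)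

theory Defs
  imports Main "HOL-Computational_Algebra.Primes" "HOL-Library.FuncSet" "HOL-Library.Cardinality"
begin

text \<open>F is modelled by a type 'a of characteristic 0, with a subset \<O> (ring of integers),
  a uniformizer pi, and a reduction map red : \<O> -> 'k onto the finite residue field 'k
  of cardinality q = p^f.  A complete
  discretely valued field of characteristic 0 with finite residue field is exactly a
  finite extension of Q_p.\<close>

definition padic_setup :: "'a::field_char_0 set \<Rightarrow> 'a \<Rightarrow> ('a \<Rightarrow> 'k::{field,finite}) \<Rightarrow> nat \<Rightarrow> nat \<Rightarrow> bool" where
  "padic_setup \<O> pi red p f \<longleftrightarrow>
     prime p \<and> f \<ge> 1 \<and> CARD('k) = p ^ f \<and>
     \<comment> \<open>\<O> is a subring\<close>
     0 \<in> \<O> \<and> 1 \<in> \<O> \<and> (\<forall>x\<in>\<O>. \<forall>y\<in>\<O>. x + y \<in> \<O> \<and> x * y \<in> \<O> \<and> - x \<in> \<O>) \<and>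
     \<comment> \<open>pi is a uniformizer of the discrete valuation ring \<O>\<close>
     pi \<in> \<O> \<and> pi \<noteq> 0 \<and> inverse pi \<notin> \<O> \<and>
     (\<forall>x. x \<noteq> 0 \<longrightarrow> (\<exists>m::int. \<exists>u\<in>\<O>. inverse u \<in> \<O> \<and> x = pi powi m * u)) \<and>
     \<comment> \<open>red is a surjective ring homomorphism \<O> -> 'k with kernel pi \<O>\<close>
     (\<forall>x\<in>\<O>. \<forall>y\<in>\<O>. red (x + y) = red x + red y \<and> red (x * y) = red x * red y) \<and>
     red 1 = 1 \<and> red ` \<O> = UNIV \<and>
     (\<forall>x\<in>\<O>. red x = 0 \<longleftrightarrow> (\<exists>y\<in>\<O>. x = pi * y)) \<and>
     \<comment> \<open>completeness for the pi-adic topology\<close>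
     (\<forall>s::nat \<Rightarrow> 'a. (\<forall>k. s k \<in> \<O> \<and> (\<exists>y\<in>\<O>. s (Suc k) - s k = pi ^ k * y)) \<longrightarrow>
        (\<exists>l\<in>\<O>. \<forall>k. \<exists>y\<in>\<O>. l - s k = pi ^ k * y))"

definition teich :: "'a::field set \<Rightarrow> ('a \<Rightarrow> 'k::{field,finite}) \<Rightarrow> 'k \<Rightarrow> 'a" where
  "teich \<O> red x = (THE y. y \<in> \<O> \<and> red y = x \<and> y ^ CARD('k) = y)"

datatype 'a mat2 = M2 'a 'a 'a 'a  \<comment> \<open>M2 a b c d = (a b; c d)\<close>

fun mmul :: "'a::comm_ring_1 mat2 \<Rightarrow> 'a mat2 \<Rightarrow> 'a mat2" (infixl "\<cdot>" 70) where
  "M2 a b c d \<cdot> M2 a' b' c' d' = M2 (a*a' + b*c') (a*b' + b*d') (c*a' + d*c') (c*b' + d*d')"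

fun smul :: "'a::comm_ring_1 \<Rightarrow> 'a mat2 \<Rightarrow> 'a mat2" where
  "smul z (M2 a b c d) = M2 (z*a) (z*b) (z*c) (z*d)"

fun det2 :: "'a::comm_ring_1 mat2 \<Rightarrow> 'a" where
  "det2 (M2 a b c d) = a*d - b*c"

fun dent :: "'a mat2 \<Rightarrow> 'a" where "dent (M2 a b c d) = d"

definition Kgrp :: "'a::field set \<Rightarrow> 'a mat2 set" where
  "Kgrp \<O> = {M2 a b c d | a b c d. a \<in> \<O> \<and> b \<in> \<O> \<and> c \<in> \<O> \<and> d \<in> \<O> \<and>
                 det2 (M2 a b c d) \<noteq> 0 \<and> inverse (det2 (M2 a b c d)) \<in> \<O>}"

definition Iwa :: "'a::field set \<Rightarrow> 'a \<Rightarrow> 'a mat2 set" where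
  "Iwa \<O> pi = {M2 a b c d | a b c d. M2 a b c d \<in> Kgrp \<O> \<and> (\<exists>y\<in>\<O>. c = pi * y)}"

definition IZ :: "'a::field set \<Rightarrow> 'a \<Rightarrow> 'a mat2 set" where
  "IZ \<O> pi = {smul z k | z k. z \<noteq> 0 \<and> k \<in> Iwa \<O> pi}"

text \<open>chi_r on IZ: (a b; pi c d) |-> (red d)^r on I and diag(pi,pi) |-> 1.  Since
  Z = pi^Z . \<O>^x and \<O>^x . I = I, every h in IZ is pi^m k with k in I, uniquely.\<close>
definition chi :: "'a::field set \<Rightarrow> 'a \<Rightarrow> ('a \<Rightarrow> 'k::field) \<Rightarrow> nat \<Rightarrow> 'a mat2 \<Rightarrow> 'k" where
  "chi \<O> pi red r h = (THE v. \<exists>m::int. \<exists>k \<in> Iwa \<O> pi. h = smul (pi powi m) k \<and> v = red (dent k) ^ r)"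

text \<open>The element [g,1] of ind_{IZ}^G chi_r, viewed as a function G -> F_q (values of
  chi_r lie in F_q, a subfield of the coefficient field): supported on IZ g^{-1},
  with [g,1](h g^{-1}) = chi_r(h).\<close>
definition bracket :: "'a::field set \<Rightarrow> 'a \<Rightarrow> ('a \<Rightarrow> 'k::field) \<Rightarrow> nat \<Rightarrow> 'a mat2 \<Rightarrow> 'a mat2 \<Rightarrow> 'k" where
  "bracket \<O> pi red r g = (\<lambda>x. if x \<cdot> g \<in> IZ \<O> pi then chi \<O> pi red r (x \<cdot> g) else 0)"

definition beta :: "'a \<Rightarrow> 'a::comm_ring_1 mat2" where "beta pi = M2 0 1 pi 0"
definition wmat :: "'a::comm_ring_1 mat2" where "wmat = M2 0 1 1 0"

text \<open>Images under T_{1,2} and T_{-1,0} of a finite combination sum_s c_s [g_s,1]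
  (both operators are linear, given on the [g,1] by the formulas of the paper).\<close>
definition T12_comb :: "'a::field set \<Rightarrow> 'a \<Rightarrow> ('a \<Rightarrow> 'k::{field,finite}) \<Rightarrow> nat \<Rightarrow>
     'b set \<Rightarrow> ('b \<Rightarrow> 'k) \<Rightarrow> ('b \<Rightarrow> 'a mat2) \<Rightarrow> 'a mat2 \<Rightarrow> 'k" where
  "T12_comb \<O> pi red r S c g = (\<lambda>x. \<Sum>s\<in>S. c s *
      (\<Sum>t\<in>(UNIV::'k set). bracket \<O> pi red r (g s \<cdot> beta pi \<cdot> M2 1 (teich \<O> red t) 0 1 \<cdot> wmat) x))"

definition Tm10_comb :: "'a::field set \<Rightarrow> 'a \<Rightarrow> ('a \<Rightarrow> 'k::{field,finite}) \<Rightarrow> nat \<Rightarrow>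
     'b set \<Rightarrow> ('b \<Rightarrow> 'k) \<Rightarrow> ('b \<Rightarrow> 'a mat2) \<Rightarrow> 'a mat2 \<Rightarrow> 'k" where
  "Tm10_comb \<O> pi red r S c g = (\<lambda>x. \<Sum>s\<in>S. c s *
      (\<Sum>t\<in>(UNIV::'k set). bracket \<O> pi red r (g s \<cdot> M2 pi (teich \<O> red t) 0 1) x))"

definition teich_sum :: "'a::field set \<Rightarrow> 'a \<Rightarrow> ('a \<Rightarrow> 'k::{field,finite}) \<Rightarrow> nat \<Rightarrow> (nat \<Rightarrow> 'k) \<Rightarrow> 'a" where
  "teich_sum \<O> pi red m mu = (\<Sum>j<m. teich \<O> red (mu j) * pi ^ j)"

definition digit :: "nat \<Rightarrow> nat \<Rightarrow> nat \<Rightarrow> nat" where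
  "digit p i j = (i div p ^ j) mod p"

end

theory Submission
  imports Defs "HOL-Number_Theory.Residues" "HOL-Computational_Algebra.Polynomial"
begin

text \<open>
  Both Hecke operators send the given combination to a sum of elements \<open>[H(\<mu>, t), 1]\<close>, and any
  two of the matrices \<open>H(\<mu>, t)\<close> differ by a right factor \<open>R\<close> of determinant one. Evaluated
  at a point \<open>x\<close> with \<open>x H(\<mu>\<^sub>0, t\<^sub>0) \<in> IZ\<close>, the term \<open>[H(\<mu>\<^sub>0, t\<^sub>0) R, 1](x)\<close> is nonzero exactly
  when \<open>R\<close> lies in the Iwahori subgroup, and then equals \<open>\<chi>\<^sub>r(x H(\<mu>\<^sub>0, t\<^sub>0))\<close> times the
  \<open>r\<close>-th power of the reduced lower right entry of \<open>R\<close>. For both families this happens for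
  at most one \<open>t\<close> per \<open>\<mu>\<close> agreeing with \<open>\<mu>\<^sub>0\<close> below the last digit, so the operator kills
  the combination iff the character sums \<open>\<Sum>\<^sub>m m\<^sup>i (1 - t\<^sub>0 (m - m\<^sub>0))\<^sup>\<rho>\<close> vanish for all
  \<open>m\<^sub>0, t\<^sub>0\<close>, with \<open>\<rho> = r\<close> for \<open>T\<^sub>1\<^sub>,\<^sub>2\<close> and \<open>\<rho> = q - 1 - r\<close> for \<open>T\<^sub>-\<^sub>1\<^sub>,\<^sub>0\<close>.
  Expanding binomially and using that \<open>\<Sum>\<^sub>m m\<^sup>a\<close> is \<open>-1\<close> for \<open>a = q - 1\<close> and \<open>0\<close> otherwise
  (for \<open>a < 2(q - 1)\<close>), this happens iff \<open>i + \<rho> < q - 1\<close> or \<open>p\<close> divides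
  \<open>\<rho> choose (q - 1 - i)\<close>; Lucas's theorem turns the latter into the digit conditions.
\<close>

section \<open>Power sums over a finite field\<close>

lemma card_UNIV_field_ge_2: "CARD('k::{field,finite}) \<ge> 2"
proof -
  have "card {0::'k, 1} \<le> CARD('k)" by (intro card_mono) auto
  thus ?thesis by simp
qed

lemma power_card_minus_one_eq_1:
  fixes x :: "'k::{field,finite}"
  assumes "x \<noteq> 0"
  shows "x ^ (CARD('k) - 1) = 1"
proof -
  let ?U = "UNIV - {0::'k}"
  have "(\<Prod>y\<in>?U. x * y) = (\<Prod>y\<in>?U. y)"
    by (rule prod.reindex_bij_witness[of _ "\<lambda>y. y / x" "\<lambda>y. x * y"]) (use assms in auto)
  moreover have "(\<Prod>y\<in>?U. x * y) = x ^ (CARD('k) - 1) * (\<Prod>y\<in>?U. y)"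
    by (simp add: prod.distrib card_Diff_singleton)
  moreover have "(\<Prod>y\<in>?U. y) \<noteq> 0" by simp
  ultimately show ?thesis by simp
qed

lemma power_card_eq_same: "(x::'k::{field,finite}) ^ CARD('k) = x"
proof (cases "x = 0")
  case False
  have "x ^ CARD('k) = x * x ^ (CARD('k) - 1)"
    using card_UNIV_field_ge_2[where 'k='k] by (simp flip: power_Suc)
  thus ?thesis using power_card_minus_one_eq_1[OF False] by simp
qed simp

lemma power_card_power_eq_same: "(x::'k::{field,finite}) ^ (CARD('k) ^ k) = x"
  by (induction k) (simp_all add: power_mult power_card_eq_same flip: power_Suc2)

lemma of_nat_card_field: "of_nat CARD('k) = (0::'k::{field,finite})"
  using CHAR_dvd_CARD[where 'a='k] by (simp add: of_nat_eq_0_iff_char_dvd)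

lemma CHAR_finite_field:
  assumes "CARD('k::{field,finite}) = p ^ f" "prime p"
  shows "CHAR('k) = p"
proof -
  have "prime CHAR('k)" by (intro prime_CHAR_semidom finite_imp_CHAR_pos) simp
  moreover have "CHAR('k) dvd p ^ f" using CHAR_dvd_CARD[where 'a='k] assms(1) by simp
  ultimately have "CHAR('k) dvd p" by (rule prime_dvd_power)
  with \<open>prime CHAR('k)\<close> assms(2) show ?thesis by (simp add: primes_dvd_imp_eq)
qed

lemma exists_power_neq_1:
  assumes "0 < a" "a < CARD('k::{field,finite}) - 1"
  shows "\<exists>y::'k. y \<noteq> 0 \<and> y ^ a \<noteq> 1"
proof (rule ccontr)
  assume "\<not> ?thesis"
  hence roots: "UNIV - {0} \<subseteq> {x::'k. poly (monom 1 a - 1) x = 0}"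
    by (auto simp: poly_monom)
  have "poly (monom 1 a - 1) 0 \<noteq> (0::'k)"
    using assms(1) by (simp add: poly_monom zero_power)
  hence nonzero: "monom 1 a - 1 \<noteq> (0::'k poly)" by auto
  have "card (UNIV - {0::'k}) \<le> card {x::'k. poly (monom 1 a - 1) x = 0}"
    by (rule card_mono[OF _ roots]) simp
  also have "\<dots> \<le> degree (monom 1 a - 1 :: 'k poly)"
    by (rule card_poly_roots_bound[OF nonzero])
  also have "\<dots> \<le> a"
    by (rule degree_diff_le) (auto simp: degree_monom_le)
  finally show False using assms(2) by (simp add: card_Diff_singleton)
qed

lemma sum_powers_eq_0:
  assumes "0 < a" "a < CARD('k::{field,finite}) - 1"
  shows "(\<Sum>x\<in>UNIV. x ^ a) = (0::'k)"
proof -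
  obtain y :: 'k where y: "y \<noteq> 0" "y ^ a \<noteq> 1" using exists_power_neq_1[OF assms] by blast
  have "(\<Sum>x\<in>UNIV. x ^ a) = (\<Sum>x\<in>UNIV. (y * x) ^ a)"
    by (rule sum.reindex_bij_witness[of _ "\<lambda>x. y * x" "\<lambda>x. x / y"]) (use y in auto)
  also have "\<dots> = y ^ a * (\<Sum>x\<in>UNIV. x ^ a)"
    by (simp add: power_mult_distrib sum_distrib_left)
  finally have "(1 - y ^ a) * (\<Sum>x\<in>UNIV. x ^ a) = 0" by (simp add: algebra_simps)
  thus ?thesis using y by simp
qed

lemma sum_powers_finite_field:
  assumes "a < 2 * (CARD('k::{field,finite}) - 1)"
  shows "(\<Sum>x\<in>UNIV. x ^ a) = (if a = CARD('k) - 1 then -1 else (0::'k))"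
proof -
  define q where "q = CARD('k)"
  have q2: "q \<ge> 2" unfolding q_def by (rule card_UNIV_field_ge_2)
  have reduce: "x ^ (b + (q - 1)) = x ^ b" if "0 < b" for b and x :: 'k
  proof (cases "x = 0")
    case False
    have "x ^ (b + (q - 1)) = x ^ b * x ^ (q - 1)" by (rule power_add)
    thus ?thesis using power_card_minus_one_eq_1[OF False] by (simp add: q_def)
  qed (use that in \<open>simp add: power_0_left\<close>)
  consider "a = 0" | "0 < a \<and> a < q - 1" | "a = q - 1" | "q - 1 < a" by linarith
  thus ?thesis
  proof cases
    case 1 thus ?thesis using q2 of_nat_card_field[where 'k='k] by (simp add: q_def)
  next
    case 2 thus ?thesis using sum_powers_eq_0[of a, where 'k='k] by (simp add: q_def)
  next
    case 3
    have "(\<Sum>x\<in>UNIV. x ^ a) = (\<Sum>x\<in>UNIV - {0}. (x::'k) ^ a)"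
      using 3 q2 by (simp add: sum.remove[of UNIV 0])
    also have "\<dots> = (\<Sum>x\<in>UNIV - {0::'k}. 1)"
      by (intro sum.cong refl) (metis 3 q_def power_card_minus_one_eq_1 DiffD2 singletonI)
    also have "\<dots> = of_nat q - 1"
      using q2 by (simp add: card_Diff_singleton q_def of_nat_diff)
    finally show ?thesis using 3 of_nat_card_field[where 'k='k] by (simp add: q_def)
  next
    case 4
    have "(\<Sum>x\<in>UNIV. x ^ a) = (\<Sum>x\<in>UNIV. (x::'k) ^ (a - (q - 1)))"
      using reduce[of "a - (q - 1)"] 4 by simp
    also have "\<dots> = 0" using 4 assms by (intro sum_powers_eq_0) (auto simp: q_def)
    finally show ?thesis using 4 by (simp add: q_def)
  qed
qed

lemma sum_power_mult_linear_power:
  fixes b c :: "'k::{field,finite}"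
  assumes "\<rho> < CARD('k) - 1" "i \<le> CARD('k) - 1"
  shows "(\<Sum>m\<in>UNIV. m ^ i * (c + b * m) ^ \<rho>) =
    (if CARD('k) - 1 - i \<le> \<rho>
     then - (of_nat (\<rho> choose (CARD('k) - 1 - i)) * b ^ (CARD('k) - 1 - i) * c ^ (\<rho> - (CARD('k) - 1 - i)))
     else 0)"
proof -
  define q where "q = CARD('k)"
  define a where "a k = of_nat (\<rho> choose k) * b ^ k * c ^ (\<rho> - k)" for k
  have "(\<Sum>m\<in>UNIV. m ^ i * (c + b * m) ^ \<rho>) = (\<Sum>m\<in>UNIV. \<Sum>k\<le>\<rho>. a k * m ^ (i + k))"
  proof (intro sum.cong refl)
    fix m :: 'k
    have "(c + b * m) ^ \<rho> = (\<Sum>k\<le>\<rho>. of_nat (\<rho> choose k) * (b * m) ^ k * c ^ (\<rho> - k))"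
      using binomial_ring[of "b * m" c \<rho>] by (simp add: add.commute)
    thus "m ^ i * (c + b * m) ^ \<rho> = (\<Sum>k\<le>\<rho>. a k * m ^ (i + k))"
      by (simp add: a_def sum_distrib_left power_mult_distrib power_add mult_ac)
  qed
  also have "\<dots> = (\<Sum>k\<le>\<rho>. a k * (\<Sum>m\<in>UNIV. m ^ (i + k)))"
    by (subst sum.swap) (simp add: sum_distrib_left)
  also have "\<dots> = (\<Sum>k\<le>\<rho>. if k = q - 1 - i then - a k else 0)"
  proof (intro sum.cong refl)
    fix k assume "k \<in> {..\<rho>}"
    hence "i + k < 2 * (CARD('k) - 1)" using assms by auto
    thus "a k * (\<Sum>m\<in>UNIV. m ^ (i + k)) = (if k = q - 1 - i then - a k else 0)"
      using assms(2) by (auto simp: sum_powers_finite_field q_def)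
  qed
  also have "\<dots> = (if q - 1 - i \<le> \<rho> then - a (q - 1 - i) else 0)"
    by (subst sum.delta) auto
  finally show ?thesis by (simp add: a_def q_def)
qed

lemma character_sum_vanishes_iff:
  fixes i \<rho> :: nat
  assumes "\<rho> < CARD('k::{field,finite}) - 1" "i \<le> CARD('k) - 1"
  shows "(\<forall>m0 t0::'k. (\<Sum>m\<in>UNIV. m ^ i * (1 - t0 * (m - m0)) ^ \<rho>) = 0) \<longleftrightarrow>
    i + \<rho> < CARD('k) - 1 \<or> of_nat (\<rho> choose (CARD('k) - 1 - i)) = (0::'k)"
proof -
  define s where "s = CARD('k) - 1 - i"
  have sum_eq: "(\<Sum>m\<in>UNIV. m ^ i * (1 - t0 * (m - m0)) ^ \<rho>) =
    (if s \<le> \<rho> then - (of_nat (\<rho> choose s) * (- t0) ^ s * (1 + t0 * m0) ^ (\<rho> - s)) else 0)"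
    for t0 m0 :: 'k
  proof -
    have "1 - t0 * (m - m0) = (1 + t0 * m0) + (- t0) * m" for m by (simp add: algebra_simps)
    thus ?thesis unfolding s_def by (simp only: sum_power_mult_linear_power[OF assms])
  qed
  have s: "s \<le> \<rho> \<longleftrightarrow> \<not> i + \<rho> < CARD('k) - 1" unfolding s_def using assms by linarith
  show ?thesis unfolding s_def[symmetric]
  proof
    assume vanish: "\<forall>m0 t0::'k. (\<Sum>m\<in>UNIV. m ^ i * (1 - t0 * (m - m0)) ^ \<rho>) = 0"
    show "i + \<rho> < CARD('k) - 1 \<or> of_nat (\<rho> choose s) = (0::'k)"
    proof (cases "i + \<rho> < CARD('k) - 1")
      case False
      hence "- of_nat (\<rho> choose s) = (\<Sum>m\<in>UNIV. m ^ i * (1 - (- 1) * (m - 0)) ^ \<rho> :: 'k)"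
        using s sum_eq[of "- 1" 0] by simp
      also have "\<dots> = (0::'k)" using vanish by blast
      finally show ?thesis by simp
    qed simp
  qed (use s in \<open>auto simp: sum_eq\<close>)
qed

lemma inverse_power_eq_power_card_minus:
  fixes x :: "'k::{field,finite}"
  assumes "0 < r" "r < CARD('k) - 1"
  shows "inverse x ^ r = x ^ (CARD('k) - 1 - r)"
proof (cases "x = 0")
  case False
  have "x ^ (CARD('k) - 1 - r) * x ^ r = 1"
    using assms power_card_minus_one_eq_1[OF False] by (simp flip: power_add)
  thus ?thesis using False by (simp add: field_simps power_inverse)
qed (use assms in \<open>simp add: zero_power\<close>)

section \<open>Lucas's theorem and base \<open>p\<close> digits\<close>

lemma coeff_one_plus_X_power: "coeff ([:1, 1:] ^ n) k = (of_nat (n choose k) :: 'a::comm_semiring_1)"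
proof (cases "k \<le> n")
  case False
  have "degree ([:1::'a, 1:] ^ n) \<le> n"
    using degree_power_le[of "[:1::'a, 1:]" n] by simp
  thus ?thesis using False by (simp add: coeff_eq_0 binomial_eq_0)
qed (use coeff_linear_poly_power[of k n 1 1] in simp)

lemma coeff_one_plus_monom_power:
  assumes "p > 0"
  shows "coeff ((1 + monom 1 p) ^ m) k =
    (if p dvd k then of_nat (m choose (k div p)) else (0::'a::comm_semiring_1))"
proof (induction m arbitrary: k)
  case 0
  show ?case
  proof (cases "k = 0")
    case False
    hence "p dvd k \<Longrightarrow> k div p \<noteq> 0" using assms by (auto elim!: dvdE)
    thus ?thesis using False by (auto simp: binomial_eq_0)
  qed simp
next
  case (Suc m)
  have "(1 + monom 1 p) ^ Suc m = (1 + monom 1 p) ^ m + monom 1 p * (1 + monom 1 p :: 'a poly) ^ m"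
    by (simp add: algebra_simps)
  hence coeff_Suc: "coeff ((1 + monom 1 p) ^ Suc m) k = coeff ((1 + monom 1 p :: 'a poly) ^ m) k +
      (if k < p then 0 else coeff ((1 + monom 1 p :: 'a poly) ^ m) (k - p))"
    by (simp add: coeff_monom_mult)
  show ?case
  proof (cases "p dvd k")
    case False
    hence "\<not> p dvd (k - p)" if "\<not> k < p" using that by (simp add: dvd_minus_self)
    thus ?thesis using False unfolding coeff_Suc by (simp add: Suc.IH)
  next
    case True
    then obtain j where j: "k = p * j" by (elim dvdE)
    show ?thesis
    proof (cases j)
      case 0 thus ?thesis using j assms unfolding coeff_Suc by (simp add: Suc.IH)
    next
      case (Suc j')
      have "\<not> k < p" "k - p = p * j'" using j Suc assms by (simp_all add: algebra_simps)
      thus ?thesis unfolding coeff_Suc using j Suc assms by (simp add: Suc.IH add.commute)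
    qed
  qed
qed

lemma binomial_eq_0_off_base_digit:
  assumes "p dvd j" "j \<le> b" "j \<noteq> p * (b div p)" "a0 < p"
  shows "a0 choose (b - j) = 0"
proof -
  obtain j' where j': "j = p * j'" using assms(1) by (elim dvdE)
  have p0: "p > 0" using assms(4) by simp
  have "j' \<le> b div p" using assms(2) j' p0 by (simp add: less_eq_div_iff_mult_less_eq mult.commute)
  moreover have "j' \<noteq> b div p" using assms(3) j' by auto
  ultimately have "p * (j' + 1) \<le> p * (b div p)" by (intro mult_le_mono2) simp
  also have "\<dots> \<le> b" by (simp add: times_div_less_eq_dividend)
  finally have "a0 < b - j" using j' assms(4) by (simp add: algebra_simps)
  thus ?thesis by (simp add: binomial_eq_0)
qed

lemma of_nat_binomial_base_digit:
  assumes "CHAR('a::comm_ring_1) = p" "prime p" "a0 < p"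
  shows "(of_nat ((p * a + a0) choose b) :: 'a) = of_nat (a choose (b div p)) * of_nat (a0 choose (b mod p))"
proof -
  have p0: "p > 0" using assms(2) prime_gt_0_nat by blast
  define X :: "'a poly" where "X = [:1, 1:]"
  have "X ^ p = (1 + [:0, 1:]) ^ p" by (simp add: X_def one_pCons)
  also have "\<dots> = 1 + monom 1 p"
    using assms by (simp add: freshmans_dream monom_altdef)
  finally have X_pow: "X ^ (p * a + a0) = (1 + monom 1 p) ^ a * X ^ a0"
    by (simp add: power_add power_mult)
  have "of_nat ((p * a + a0) choose b) = coeff (X ^ (p * a + a0)) b"
    by (simp only: X_def coeff_one_plus_X_power)
  also have "\<dots> = coeff ((1 + monom 1 p) ^ a * X ^ a0) b"
    by (simp only: X_pow)
  also have "\<dots> = (\<Sum>j\<le>b. (if p dvd j then of_nat (a choose (j div p)) else 0) * of_nat (a0 choose (b - j)))"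
    by (simp add: coeff_mult coeff_one_plus_monom_power[OF p0] X_def coeff_one_plus_X_power)
  also have "\<dots> = (\<Sum>j\<in>{p * (b div p)}. (if p dvd j then of_nat (a choose (j div p)) else 0) * of_nat (a0 choose (b - j)))"
    using binomial_eq_0_off_base_digit[OF _ _ _ assms(3)]
    by (intro sum.mono_neutral_right) (auto simp: times_div_less_eq_dividend binomial_eq_0)
  also have "\<dots> = of_nat (a choose (b div p)) * of_nat (a0 choose (b mod p))"
    using p0 by (simp add: minus_mult_div_eq_mod)
  finally show ?thesis .
qed

lemma digit_0: "digit p x 0 = x mod p"
  by (simp add: digit_def)

lemma digit_Suc: "digit p x (Suc j) = digit p (x div p) j"
  by (simp add: digit_def div_mult2_eq mult.commute)

lemma digit_less: "p > 0 \<Longrightarrow> digit p x j < p"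
  by (simp add: digit_def)

lemma of_nat_binomial_eq_0_iff_small:
  assumes "CHAR('a::semiring_1) = p" "prime p" "a < p"
  shows "(of_nat (a choose b) :: 'a) = 0 \<longleftrightarrow> a < b"
proof
  assume "of_nat (a choose b) = (0::'a)"
  hence dvd: "p dvd (a choose b)" using assms(1) by (simp add: of_nat_eq_0_iff_char_dvd)
  show "a < b"
  proof (rule ccontr)
    assume "\<not> a < b"
    hence "fact b * fact (a - b) * (a choose b) = fact a" by (intro binomial_fact_lemma) simp
    hence "p dvd fact a" using dvd by (metis dvd_mult)
    thus False using assms(2,3) prime_dvd_fact_iff by auto
  qed
qed (simp add: binomial_eq_0)

theorem lucas_binomial_eq_0_iff:
  assumes "CHAR('a::idom) = p" "prime p"
  shows "(of_nat (a choose b) :: 'a) = 0 \<longleftrightarrow> (\<exists>j. digit p a j < digit p b j)"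
proof (induction b arbitrary: a rule: less_induct)
  case (less b)
  have p1: "p > 1" using assms(2) prime_gt_1_nat by blast
  show ?case
  proof (cases "b = 0")
    case True
    thus ?thesis by (simp add: digit_def)
  next
    case False
    have "(of_nat (a choose b) :: 'a) = of_nat ((p * (a div p) + a mod p) choose b)" by simp
    also have "\<dots> = of_nat ((a div p) choose (b div p)) * of_nat ((a mod p) choose (b mod p))"
      using assms p1 by (intro of_nat_binomial_base_digit) simp_all
    finally have "(of_nat (a choose b) :: 'a) = 0 \<longleftrightarrow>
        (of_nat ((a div p) choose (b div p)) :: 'a) = 0 \<or> a mod p < b mod p"
      using of_nat_binomial_eq_0_iff_small[OF assms, of "a mod p" "b mod p"] p1 by simp
    also have "(of_nat ((a div p) choose (b div p)) :: 'a) = 0 \<longleftrightarrow>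
        (\<exists>j. digit p (a div p) j < digit p (b div p) j)"
      using False p1 by (intro less.IH) simp
    also have "(\<exists>j. digit p (a div p) j < digit p (b div p) j) \<or> a mod p < b mod p \<longleftrightarrow>
        (\<exists>j. digit p a j < digit p b j)"
      by (metis digit_0 digit_Suc not0_implies_Suc)
    finally show ?thesis .
  qed
qed

lemma digit_eq_0_above:
  assumes "p > 0" "x < p ^ f" "f \<le> j"
  shows "digit p x j = 0"
proof -
  have "p ^ f \<le> p ^ j" using assms by (simp add: power_increasing)
  thus ?thesis using assms by (simp add: digit_def)
qed

lemma digit_top:
  assumes "p > 0" "x < p ^ f" "f \<ge> 1"
  shows "digit p x (f - 1) = x div p ^ (f - 1)"
proof -
  have "p ^ f = p ^ (f - 1) * p" using assms(3) by (simp flip: power_Suc2)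
  hence "x div p ^ (f - 1) < p" using assms by (simp add: div_less_iff_less_mult mult.commute)
  thus ?thesis by (simp add: digit_def)
qed

lemma lucas_binomial_eq_0_iff_low_digits:
  assumes "CHAR('a::idom) = p" "prime p" "b \<le> a" "a < p ^ f"
  shows "(of_nat (a choose b) :: 'a) = 0 \<longleftrightarrow> (\<exists>j. j + 1 < f \<and> digit p a j < digit p b j)"
proof -
  have p0: "p > 0" using assms(2) prime_gt_0_nat by blast
  have "j + 1 < f" if "digit p a j < digit p b j" for j
  proof -
    have "j < f" using that digit_eq_0_above[OF p0, of b f j] assms(3,4) by fastforce
    moreover have "j \<noteq> f - 1"
    proof
      assume "j = f - 1"
      hence "a div p ^ (f - 1) < b div p ^ (f - 1)"
        using that digit_top[OF p0, of a f] digit_top[OF p0, of b f] assms(3,4) \<open>j < f\<close> by simp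
      thus False using div_le_mono[OF assms(3), of "p ^ (f - 1)"] by linarith
    qed
    ultimately show ?thesis by simp
  qed
  thus ?thesis using lucas_binomial_eq_0_iff[OF assms(1,2)] by blast
qed

lemma complement_div_mod:
  fixes d N x :: nat
  assumes "x < d * N"
  shows "(d * N - 1 - x) div d = N - 1 - x div d" "(d * N - 1 - x) mod d = d - 1 - x mod d"
proof -
  define q0 r0 where "q0 = x div d" and "r0 = x mod d"
  have d: "d > 0" using assms by (cases d) simp_all
  have x: "x = d * q0 + r0" and r0: "r0 < d" unfolding q0_def r0_def using d by simp_all
  have "q0 < N" using assms d by (simp add: q0_def div_less_iff_less_mult mult.commute)
  then obtain N' where N: "N = q0 + 1 + N'" using less_imp_Suc_add by fastforce
  have eq: "d * N - 1 - x = d * N' + (d - 1 - r0)"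
    unfolding N x using r0 by (simp add: distrib_left)
  have r: "d - 1 - r0 < d" using d by simp
  have "(d * N - 1 - x) div d = N'" unfolding eq using r d by (simp only: div_mult_self4 div_less)
  moreover have "(d * N - 1 - x) mod d = d - 1 - r0" unfolding eq using r by (metis mod_mult_self4 mod_less)
  ultimately show "(d * N - 1 - x) div d = N - 1 - x div d" "(d * N - 1 - x) mod d = d - 1 - x mod d"
    by (simp_all add: N q0_def r0_def)
qed

lemma digit_complement:
  assumes "x < p ^ f" "j < f"
  shows "digit p (p ^ f - 1 - x) j = p - 1 - digit p x j"
proof -
  have "Suc (f - j - 1) = f - j" using assms(2) by simp
  hence pf: "p ^ f = p ^ j * p ^ (f - j)" "p ^ (f - j) = p * p ^ (f - j - 1)"
    using assms(2) by (simp_all flip: power_add power_Suc)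
  have p0: "p > 0" using assms by (cases "p = 0") (simp_all add: power_0_left)
  have x: "x < p ^ j * p ^ (f - j)" using assms(1) pf by simp
  hence "x div p ^ j < p * p ^ (f - j - 1)" using pf p0 by (simp add: div_less_iff_less_mult mult.commute)
  hence "(p * p ^ (f - j - 1) - 1 - x div p ^ j) mod p = p - 1 - x div p ^ j mod p"
    by (rule complement_div_mod(2))
  thus ?thesis
    unfolding digit_def pf(1) complement_div_mod(1)[OF x] by (simp only: pf(2))
qed

lemma binomial_complement_eq_0_iff_digits:
  assumes "CHAR('a::idom) = p" "prime p" "\<rho> < p ^ f" "i < p ^ f" "p ^ f - 1 - i \<le> \<rho>"
  shows "(of_nat (\<rho> choose (p ^ f - 1 - i)) :: 'a) = 0 \<longleftrightarrow>
    (\<exists>j. j + 1 < f \<and> digit p \<rho> j + digit p i j < p - 1)"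
proof -
  have "(of_nat (\<rho> choose (p ^ f - 1 - i)) :: 'a) = 0 \<longleftrightarrow>
      (\<exists>j. j + 1 < f \<and> digit p \<rho> j < digit p (p ^ f - 1 - i) j)"
    using assms by (intro lucas_binomial_eq_0_iff_low_digits) simp_all
  also have "\<dots> \<longleftrightarrow> (\<exists>j. j + 1 < f \<and> digit p \<rho> j + digit p i j < p - 1)"
    using digit_complement[OF assms(4)] by (metis Suc_eq_plus1 Suc_lessD less_diff_conv)
  finally show ?thesis .
qed

lemma character_sum_vanishes_iff_digits:
  assumes "CARD('k::{field,finite}) = p ^ f" "prime p" "\<rho> < CARD('k) - 1" "i \<le> CARD('k) - 1"
  shows "(\<forall>m0 t0::'k. (\<Sum>m\<in>UNIV. m ^ i * (1 - t0 * (m - m0)) ^ \<rho>) = 0) \<longleftrightarrow>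
    i + \<rho> < CARD('k) - 1 \<or> (\<exists>j. j + 1 < f \<and> digit p \<rho> j + digit p i j < p - 1)"
proof -
  have "(of_nat (\<rho> choose (CARD('k) - 1 - i)) :: 'k) = 0 \<longleftrightarrow>
      (\<exists>j. j + 1 < f \<and> digit p \<rho> j + digit p i j < p - 1)" if "\<not> i + \<rho> < CARD('k) - 1"
    unfolding assms(1) using that assms card_UNIV_field_ge_2[where 'k='k]
    by (intro binomial_complement_eq_0_iff_digits[OF CHAR_finite_field[OF assms(1,2)] assms(2)]) simp_all
  thus ?thesis unfolding character_sum_vanishes_iff[OF assms(3,4)] by blast
qed

lemma digit_sum_condition_iff:
  assumes "r < p ^ f - 1" "i \<le> p ^ f - 1"
  shows "(i + r < p ^ f - 1 \<or> (\<exists>j. j + 1 < f \<and> digit p r j + digit p i j < p - 1)) \<longleftrightarrow>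
    (i \<le> p ^ f - 2 - r \<or> (i > p ^ f - 1 - r \<and> (\<exists>j. j + 1 < f \<and> digit p i j < p - 1 - digit p r j)))"
proof -
  have digits: "digit p i j < p - 1 - digit p r j \<longleftrightarrow> digit p r j + digit p i j < p - 1" for j
    by linarith
  consider "i < p ^ f - 1 - r" | "i = p ^ f - 1 - r" | "i > p ^ f - 1 - r" by linarith
  thus ?thesis
  proof cases
    case 2
    have "\<not> (digit p r j + digit p i j < p - 1)" if "j < f" for j
      using that digit_complement[of r p f j] assms 2 by simp
    thus ?thesis using assms 2 by auto
  qed (use assms digits in auto)
qed

lemma complement_digit_sum_condition_iff:
  assumes "0 < r" "r < p ^ f" "i \<le> p ^ f - 1"
  shows "(i + (p ^ f - 1 - r) < p ^ f - 1 \<or>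
      (\<exists>j. j + 1 < f \<and> digit p (p ^ f - 1 - r) j + digit p i j < p - 1)) \<longleftrightarrow>
    (i \<le> r - 1 \<or> (i > r \<and> (\<exists>j. j + 1 < f \<and> digit p i j < digit p r j)))"
proof -
  have p0: "p > 0" using assms by (cases "p = 0") (simp_all add: power_0_left split: if_splits)
  have "digit p (p ^ f - 1 - r) j + digit p i j < p - 1 \<longleftrightarrow> digit p i j < digit p r j" if "j + 1 < f" for j
  proof -
    have "j < f" using that by simp
    thus ?thesis using digit_complement[OF assms(2) \<open>j < f\<close>] digit_less[OF p0, of r j] by arith
  qed
  hence "(\<exists>j. j + 1 < f \<and> digit p (p ^ f - 1 - r) j + digit p i j < p - 1) \<longleftrightarrow>
      (\<exists>j. j + 1 < f \<and> digit p i j < digit p r j)" by blast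
  moreover have "\<not> (\<exists>j. j + 1 < f \<and> digit p i j < digit p r j)" if "i = r" using that by simp
  ultimately show ?thesis using assms by (cases "i = r") auto
qed

section \<open>The local field and Teichmueller lifts\<close>

locale padic_field =
  fixes \<O> :: "'a::field_char_0 set" and pi :: 'a and red :: "'a \<Rightarrow> 'k::{field,finite}" and p f :: nat
  assumes padic_setup: "padic_setup \<O> pi red p f"
begin

lemma prime_p: "prime p" and card_residue_field: "CARD('k) = p ^ f"
  using padic_setup unfolding padic_setup_def by auto

lemma zero_in_O [simp]: "0 \<in> \<O>" and one_in_O [simp]: "1 \<in> \<O>" and pi_in_O [simp]: "pi \<in> \<O>"
  and pi_nonzero [simp]: "pi \<noteq> 0" and inverse_pi_notin_O: "inverse pi \<notin> \<O>"
  using padic_setup unfolding padic_setup_def by auto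

lemma add_in_O [simp, intro]: "x \<in> \<O> \<Longrightarrow> y \<in> \<O> \<Longrightarrow> x + y \<in> \<O>"
  and mult_in_O [simp, intro]: "x \<in> \<O> \<Longrightarrow> y \<in> \<O> \<Longrightarrow> x * y \<in> \<O>"
  and uminus_in_O [simp, intro]: "x \<in> \<O> \<Longrightarrow> - x \<in> \<O>"
  using padic_setup unfolding padic_setup_def by auto

lemma diff_in_O [simp, intro]: "x \<in> \<O> \<Longrightarrow> y \<in> \<O> \<Longrightarrow> x - y \<in> \<O>"
  using add_in_O[of x "- y"] by simp

lemma power_in_O [simp, intro]: "x \<in> \<O> \<Longrightarrow> x ^ n \<in> \<O>"
  by (induction n) auto

lemma sum_in_O [intro]: "(\<And>i. i \<in> A \<Longrightarrow> g i \<in> \<O>) \<Longrightarrow> sum g A \<in> \<O>"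
  by (induction A rule: infinite_finite_induct) auto

lemma red_add [simp]: "x \<in> \<O> \<Longrightarrow> y \<in> \<O> \<Longrightarrow> red (x + y) = red x + red y"
  and red_mult [simp]: "x \<in> \<O> \<Longrightarrow> y \<in> \<O> \<Longrightarrow> red (x * y) = red x * red y"
  and red_1 [simp]: "red 1 = 1"
  using padic_setup unfolding padic_setup_def by auto

lemma red_eq_0_iff: "x \<in> \<O> \<Longrightarrow> red x = 0 \<longleftrightarrow> (\<exists>y\<in>\<O>. x = pi * y)"
  using padic_setup unfolding padic_setup_def by auto

lemma red_pi [simp]: "red pi = 0"
  using red_eq_0_iff[of pi] by (auto intro: bexI[of _ 1])

lemma red_0 [simp]: "red 0 = 0"
  using red_eq_0_iff[of 0] by auto

lemma red_uminus [simp]: "x \<in> \<O> \<Longrightarrow> red (- x) = - red x"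
  using red_add[of x "- x"] by (simp add: eq_neg_iff_add_eq_0 add.commute)

lemma red_diff [simp]: "x \<in> \<O> \<Longrightarrow> y \<in> \<O> \<Longrightarrow> red (x - y) = red x - red y"
  using red_add[of x "- y"] by simp

lemma red_power [simp]: "x \<in> \<O> \<Longrightarrow> red (x ^ n) = red x ^ n"
  by (induction n) auto

lemma red_sum: "(\<And>i. i \<in> A \<Longrightarrow> g i \<in> \<O>) \<Longrightarrow> red (sum g A) = (\<Sum>i\<in>A. red (g i))"
proof (induction A rule: infinite_finite_induct)
  case (insert x F)
  have "sum g F \<in> \<O>" using insert.prems by (intro sum_in_O) auto
  thus ?case using insert by simp
qed auto

lemma red_surj: "\<exists>y\<in>\<O>. red y = t"
  using padic_setup unfolding padic_setup_def by (metis UNIV_I imageE)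

lemma unit_times_pi_powi: "x \<noteq> 0 \<Longrightarrow> \<exists>m::int. \<exists>u\<in>\<O>. inverse u \<in> \<O> \<and> x = pi powi m * u"
  using padic_setup unfolding padic_setup_def by auto

lemma pi_adic_complete:
  "(\<forall>k. s k \<in> \<O> \<and> (\<exists>y\<in>\<O>. s (Suc k) - s k = pi ^ k * y)) \<Longrightarrow>
     \<exists>l\<in>\<O>. \<forall>k. \<exists>y\<in>\<O>. l - s k = pi ^ k * y"
  using padic_setup unfolding padic_setup_def by blast

definition pi_pow_dvd :: "nat \<Rightarrow> 'a \<Rightarrow> bool" where
  "pi_pow_dvd k x \<longleftrightarrow> (\<exists>y\<in>\<O>. x = pi ^ k * y)"

lemma pi_pow_dvd_zero [simp]: "pi_pow_dvd k 0"
  unfolding pi_pow_dvd_def by (intro bexI[of _ 0]) auto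

lemma pi_pow_dvd_exp_0: "x \<in> \<O> \<Longrightarrow> pi_pow_dvd 0 x"
  unfolding pi_pow_dvd_def by auto

lemma pi_pow_dvd_pi_pow_mult: "y \<in> \<O> \<Longrightarrow> pi_pow_dvd k (pi ^ k * y)"
  unfolding pi_pow_dvd_def by auto

lemma pi_pow_dvd_add: "pi_pow_dvd k x \<Longrightarrow> pi_pow_dvd k y \<Longrightarrow> pi_pow_dvd k (x + y)"
  unfolding pi_pow_dvd_def by (auto simp flip: distrib_left)

lemma pi_pow_dvd_uminus: "pi_pow_dvd k x \<Longrightarrow> pi_pow_dvd k (- x)"
  unfolding pi_pow_dvd_def by (auto intro!: bexI[of _ "- _"])

lemma pi_pow_dvd_diff: "pi_pow_dvd k x \<Longrightarrow> pi_pow_dvd k y \<Longrightarrow> pi_pow_dvd k (x - y)"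
  using pi_pow_dvd_add[of k x "- y"] pi_pow_dvd_uminus[of k y] by simp

lemma pi_pow_dvd_mult: "pi_pow_dvd a x \<Longrightarrow> pi_pow_dvd b y \<Longrightarrow> pi_pow_dvd (a + b) (x * y)"
proof -
  assume "pi_pow_dvd a x" "pi_pow_dvd b y"
  then obtain u v where "u \<in> \<O>" "x = pi ^ a * u" "v \<in> \<O>" "y = pi ^ b * v"
    unfolding pi_pow_dvd_def by blast
  hence "u * v \<in> \<O>" "x * y = pi ^ (a + b) * (u * v)" by (simp_all add: power_add mult_ac)
  thus ?thesis unfolding pi_pow_dvd_def by blast
qed

lemma pi_pow_dvd_mono: "pi_pow_dvd k x \<Longrightarrow> j \<le> k \<Longrightarrow> pi_pow_dvd j x"
proof -
  assume "pi_pow_dvd k x" "j \<le> k"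
  then obtain y where y: "y \<in> \<O>" "x = pi ^ k * y" unfolding pi_pow_dvd_def by auto
  have "x = pi ^ j * (pi ^ (k - j) * y)"
    using y \<open>j \<le> k\<close> by (simp add: mult.assoc flip: power_add)
  thus "pi_pow_dvd j x" unfolding pi_pow_dvd_def using y by auto
qed

lemma pi_pow_dvd_cancel: "pi_pow_dvd (k + j) (pi ^ k * x) \<Longrightarrow> pi_pow_dvd j x"
  unfolding pi_pow_dvd_def by (auto simp: power_add mult.assoc)

lemma pi_pow_dvd_1_iff: "x \<in> \<O> \<Longrightarrow> pi_pow_dvd 1 x \<longleftrightarrow> red x = 0"
  unfolding pi_pow_dvd_def using red_eq_0_iff by simp

lemma pi_pow_dvd_iff_divide_in_O: "pi_pow_dvd k x \<longleftrightarrow> x / pi ^ k \<in> \<O>"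
  unfolding pi_pow_dvd_def by (metis nonzero_mult_div_cancel_left pi_nonzero power_not_zero
    times_divide_eq_right)

abbreviation tlift :: "'k \<Rightarrow> 'a" where "tlift t \<equiv> teich \<O> red t"
abbreviation tsum :: "nat \<Rightarrow> (nat \<Rightarrow> 'k) \<Rightarrow> 'a" where "tsum m \<mu> \<equiv> teich_sum \<O> pi red m \<mu>"

lemma pi_powi_notin_O: "m < 0 \<Longrightarrow> pi powi m \<notin> \<O>"
proof
  assume m: "m < 0" and in_O: "pi powi m \<in> \<O>"
  have "inverse pi = pi powi m * pi ^ nat (- m - 1)"
    using m by (simp add: power_int_minus power_int_add_1 flip: power_int_of_nat power_int_add)
  hence "inverse pi \<in> \<O>" using in_O by simp
  thus False using inverse_pi_notin_O by simp
qed

lemma pi_powi_unit_imp_eq_0: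
  assumes "pi powi d \<in> \<O>" "inverse (pi powi d) \<in> \<O>"
  shows "d = 0"
proof (rule ccontr)
  assume "d \<noteq> 0"
  moreover have "inverse (pi powi d) = pi powi (- d)" by (simp add: power_int_minus)
  ultimately show False using assms pi_powi_notin_O[of d] pi_powi_notin_O[of "- d"] by force
qed

lemma eq_0_if_pi_pow_dvd_all: "(\<And>k. pi_pow_dvd k x) \<Longrightarrow> x = 0"
proof (rule ccontr)
  assume dvd: "\<And>k. pi_pow_dvd k x" and "x \<noteq> 0"
  then obtain m u where u: "u \<in> \<O>" "inverse u \<in> \<O>" "x = pi powi m * u"
    using unit_times_pi_powi by blast
  define k where "k = nat m + 1"
  obtain y where y: "y \<in> \<O>" "x = pi ^ k * y" using dvd[of k] unfolding pi_pow_dvd_def by blast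
  have "pi powi (m - int k) = y * inverse u"
    using u y \<open>x \<noteq> 0\<close> by (simp add: power_int_diff field_simps)
  hence "pi powi (m - int k) \<in> \<O>" using y u by simp
  moreover have "m - int k < 0" unfolding k_def by simp
  ultimately show False using pi_powi_notin_O by blast
qed

lemma power_card_congruence:
  assumes "x \<in> \<O>" "y \<in> \<O>" "pi_pow_dvd k (x - y)" "k \<ge> 1"
  shows "pi_pow_dvd (k + 1) (x ^ CARD('k) - y ^ CARD('k))"
proof -
  define q where "q = CARD('k)"
  define S where "S = (\<Sum>i<q. y ^ (q - Suc i) * x ^ i)"
  have S_in_O: "S \<in> \<O>" unfolding S_def using assms by (intro sum_in_O) auto
  have "red x = red y" using pi_pow_dvd_mono[OF assms(3)] assms pi_pow_dvd_1_iff[of "x - y"] by simp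
  hence "red S = (\<Sum>i<q. red x ^ (q - 1))"
    unfolding S_def using assms by (subst red_sum) (auto simp flip: power_add)
  also have "\<dots> = of_nat q * red x ^ (q - 1)" by simp
  also have "of_nat q = (0::'k)" unfolding q_def by (rule of_nat_card_field)
  finally have "pi_pow_dvd 1 S" using pi_pow_dvd_1_iff[OF S_in_O] by simp
  hence "pi_pow_dvd (k + 1) ((x - y) * S)" by (rule pi_pow_dvd_mult[OF assms(3)])
  moreover have "x ^ q - y ^ q = (x - y) * S" unfolding S_def by (rule power_diff_sumr2)
  ultimately show ?thesis unfolding q_def by simp
qed

text \<open>The Teichmueller lift of \<open>t\<close> is the \<open>pi\<close>-adic limit of \<open>y\<^sub>0 ^ (q ^ k)\<close>
  for any lift \<open>y\<^sub>0\<close> of \<open>t\<close>.\<close>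

lemma teich_exists: "\<exists>y. y \<in> \<O> \<and> red y = t \<and> y ^ CARD('k) = y"
proof -
  define q where "q = CARD('k)"
  obtain y0 where y0: "y0 \<in> \<O>" "red y0 = t" using red_surj by blast
  define s where "s k = y0 ^ (q ^ k)" for k
  have s_in_O: "s k \<in> \<O>" for k unfolding s_def using y0 by simp
  have red_s: "red (s k) = t" for k unfolding s_def q_def using y0 by (simp add: power_card_power_eq_same)
  have s_Suc: "s (Suc k) = s k ^ q" for k unfolding s_def by (simp only: power_Suc2 power_mult)
  have cauchy: "pi_pow_dvd (k + 1) (s (Suc k) - s k)" for k
  proof (induction k)
    case 0
    show ?case using pi_pow_dvd_1_iff[of "s 1 - s 0"] s_in_O red_s by simp
  next
    case (Suc k)
    have "pi_pow_dvd (Suc k + 1) (s (Suc k) ^ q - s k ^ q)"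
      unfolding q_def by (rule power_card_congruence) (use s_in_O Suc in auto)
    thus ?case by (simp add: s_Suc)
  qed
  have "\<forall>k. s k \<in> \<O> \<and> (\<exists>y\<in>\<O>. s (Suc k) - s k = pi ^ k * y)"
    using cauchy s_in_O pi_pow_dvd_mono unfolding pi_pow_dvd_def[symmetric] by (metis le_add1)
  then obtain l where l: "l \<in> \<O>" "\<And>k. pi_pow_dvd k (l - s k)"
    using pi_adic_complete unfolding pi_pow_dvd_def by blast
  have "pi_pow_dvd k (l ^ q - l)" for k
  proof (cases "k = 0")
    case True thus ?thesis using l pi_pow_dvd_exp_0[of "l ^ q - l"] by simp
  next
    case False
    have "pi_pow_dvd (k + 1) (l ^ q - s k ^ q)"
      unfolding q_def by (rule power_card_congruence) (use l s_in_O False in auto)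
    moreover have "pi_pow_dvd (k + 1) (s (Suc k) - l)" using pi_pow_dvd_uminus[OF l(2)] by simp
    ultimately have "pi_pow_dvd (k + 1) ((l ^ q - s k ^ q) + (s (Suc k) - l))" by (rule pi_pow_dvd_add)
    hence "pi_pow_dvd k ((l ^ q - s k ^ q) + (s (Suc k) - l))" by (rule pi_pow_dvd_mono) simp
    thus ?thesis by (simp add: s_Suc)
  qed
  hence "l ^ q = l" using eq_0_if_pi_pow_dvd_all by fastforce
  moreover have "red l = t"
    using pi_pow_dvd_1_iff[of "l - s 1"] l s_in_O red_s by simp
  ultimately show ?thesis using l unfolding q_def by auto
qed

lemma teich_unique:
  assumes "y \<in> \<O>" "y' \<in> \<O>" "red y = red y'" "y ^ CARD('k) = y" "y' ^ CARD('k) = y'"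
  shows "y = y'"
proof -
  have "pi_pow_dvd (Suc k) (y - y')" for k
  proof (induction k)
    case 0 thus ?case using pi_pow_dvd_1_iff[of "y - y'"] assms by simp
  next
    case (Suc k)
    have "pi_pow_dvd (Suc k + 1) (y ^ CARD('k) - y' ^ CARD('k))"
      by (rule power_card_congruence) (use assms Suc in auto)
    thus ?case using assms by simp
  qed
  hence "pi_pow_dvd k (y - y')" for k using pi_pow_dvd_mono[of "Suc k" "y - y'" k] by simp
  thus ?thesis using eq_0_if_pi_pow_dvd_all[of "y - y'"] by simp
qed

lemma teich_spec: "tlift t \<in> \<O> \<and> red (tlift t) = t \<and> tlift t ^ CARD('k) = tlift t"
  unfolding teich_def by (rule theI') (metis teich_exists teich_unique)

lemma teich_in_O [simp]: "tlift t \<in> \<O>" and red_teich [simp]: "red (tlift t) = t"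
  using teich_spec by auto

lemma teich_sum_Suc:
  "tsum (Suc m) \<mu> = tsum m \<mu> + pi ^ m * tlift (\<mu> m)"
  by (simp add: teich_sum_def mult.commute)

lemma teich_sum_in_O [simp]: "tsum m \<mu> \<in> \<O>"
  unfolding teich_sum_def by (intro sum_in_O) simp

lemma teich_sum_cong: "(\<And>j. j < m \<Longrightarrow> \<mu> j = \<mu>' j) \<Longrightarrow> tsum m \<mu> = tsum m \<mu>'"
  unfolding teich_sum_def by (intro sum.cong) auto

lemma teich_sum_pi_pow_dvd_diff_imp_eq:
  "pi_pow_dvd m (tsum m \<mu> - tsum m \<mu>') \<Longrightarrow> j < m \<Longrightarrow> \<mu> j = \<mu>' j"
proof (induction m arbitrary: j)
  case (Suc m)
  define D where "D = tsum m \<mu> - tsum m \<mu>'"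
  define E where "E = tlift (\<mu> m) - tlift (\<mu>' m)"
  have E_in_O: "E \<in> \<O>" unfolding E_def by simp
  have dvd: "pi_pow_dvd (Suc m) (D + pi ^ m * E)"
    using Suc.prems(1) unfolding D_def E_def teich_sum_Suc by (simp add: algebra_simps)
  have "pi_pow_dvd m ((D + pi ^ m * E) - pi ^ m * E)"
    using pi_pow_dvd_mono[OF dvd] pi_pow_dvd_pi_pow_mult[OF E_in_O] by (intro pi_pow_dvd_diff) simp_all
  hence agree: "\<mu> j = \<mu>' j" if "j < m" for j using Suc.IH that unfolding D_def by simp
  hence "D = 0" unfolding D_def using teich_sum_cong[of m \<mu> \<mu>'] by simp
  hence "pi_pow_dvd (m + 1) (pi ^ m * E)" using dvd by simp
  hence "pi_pow_dvd 1 E" by (rule pi_pow_dvd_cancel)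
  hence "red E = 0" using pi_pow_dvd_1_iff[OF E_in_O] by simp
  hence "\<mu> m = \<mu>' m" unfolding E_def by simp
  thus ?case using agree Suc.prems(2) less_Suc_eq by auto
qed simp

end

section \<open>The Iwahori subgroup and the character \<open>\<chi>\<^sub>r\<close>\<close>

lemma mmul_assoc: "(A \<cdot> B) \<cdot> C = A \<cdot> (B \<cdot> C)" for A B C :: "'a::comm_ring_1 mat2"
  by (cases A; cases B; cases C) (simp add: algebra_simps)

lemma smul_mmul: "smul z A \<cdot> B = smul z (A \<cdot> B)" for A B :: "'a::comm_ring_1 mat2"
  by (cases A; cases B) (simp add: algebra_simps)

lemma mmul_smul: "A \<cdot> smul z B = smul z (A \<cdot> B)" for A B :: "'a::comm_ring_1 mat2"
  by (cases A; cases B) (simp add: algebra_simps)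

lemma smul_smul: "smul z (smul w A) = smul (z * w) A" for A :: "'a::comm_ring_1 mat2"
  by (cases A) (simp add: algebra_simps)

lemma smul_1 [simp]: "smul 1 A = A" for A :: "'a::comm_ring_1 mat2"
  by (cases A) simp

lemma det2_mmul: "det2 (A \<cdot> B) = det2 A * det2 B" for A B :: "'a::comm_ring_1 mat2"
  by (cases A; cases B) (simp add: algebra_simps)

lemma det2_smul: "det2 (smul z A) = z ^ 2 * det2 A" for A :: "'a::comm_ring_1 mat2"
  by (cases A) (simp add: algebra_simps power2_eq_square)

lemma smul_cancel_iff: "z \<noteq> 0 \<Longrightarrow> smul z A = smul z B \<longleftrightarrow> A = B" for A B :: "'a::field mat2"
  by (cases A; cases B) simp

lemma mmul_id_left [simp]: "M2 1 0 0 1 \<cdot> A = A" for A :: "'a::comm_ring_1 mat2"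
  by (cases A) simp

definition minv :: "'a::field mat2 \<Rightarrow> 'a mat2" where
  "minv A = (case A of M2 a b c d \<Rightarrow> smul (inverse (det2 A)) (M2 d (- b) (- c) a))"

lemma minv_mmul: "det2 A \<noteq> 0 \<Longrightarrow> minv A \<cdot> A = M2 1 0 0 1" for A :: "'a::field mat2"
proof (cases A)
  case (M2 a b c d)
  assume "det2 A \<noteq> 0"
  have "minv A \<cdot> A = smul (inverse (det2 A)) (M2 (det2 A) 0 0 (det2 A))"
    unfolding minv_def M2 by (simp add: algebra_simps)
  thus ?thesis using \<open>det2 A \<noteq> 0\<close> by simp
qed

context padic_field
begin

lemma Iwa_iff: "M2 a b c d \<in> Iwa \<O> pi \<longleftrightarrow> a \<in> \<O> \<and> b \<in> \<O> \<and> d \<in> \<O> \<and> (\<exists>y\<in>\<O>. c = pi * y) \<and>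
   det2 (M2 a b c d) \<noteq> 0 \<and> inverse (det2 (M2 a b c d)) \<in> \<O>"
  unfolding Iwa_def Kgrp_def by auto

lemma Iwa_det_1_iff:
  "det2 (M2 a b c d) = 1 \<Longrightarrow> M2 a b c d \<in> Iwa \<O> pi \<longleftrightarrow> a \<in> \<O> \<and> b \<in> \<O> \<and> d \<in> \<O> \<and> (\<exists>y\<in>\<O>. c = pi * y)"
  unfolding Iwa_iff by auto

lemma Iwa_intro:
  "a \<in> \<O> \<Longrightarrow> b \<in> \<O> \<Longrightarrow> d \<in> \<O> \<Longrightarrow> y \<in> \<O> \<Longrightarrow> det2 (M2 a b (pi * y) d) \<noteq> 0 \<Longrightarrow>
    inverse (det2 (M2 a b (pi * y) d)) \<in> \<O> \<Longrightarrow> M2 a b (pi * y) d \<in> Iwa \<O> pi"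
  unfolding Iwa_iff by blast

lemma id_in_Iwa: "M2 1 0 0 1 \<in> Iwa \<O> pi"
  unfolding Iwa_iff by (auto intro: bexI[of _ 0])

lemma Iwa_det_unit: "A \<in> Iwa \<O> pi \<Longrightarrow> det2 A \<noteq> 0 \<and> det2 A \<in> \<O> \<and> inverse (det2 A) \<in> \<O>"
  by (cases A) (auto simp: Iwa_iff)

lemma Iwa_mmul: "A \<in> Iwa \<O> pi \<Longrightarrow> B \<in> Iwa \<O> pi \<Longrightarrow> A \<cdot> B \<in> Iwa \<O> pi"
proof (cases A; cases B)
  fix a b c d a' b' c' d'
  assume A: "A \<in> Iwa \<O> pi" "A = M2 a b c d" and B: "B \<in> Iwa \<O> pi" "B = M2 a' b' c' d'"
  obtain y y' where "y \<in> \<O>" "c = pi * y" "y' \<in> \<O>" "c' = pi * y'" "a \<in> \<O>" "b \<in> \<O>" "d \<in> \<O>"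
    "a' \<in> \<O>" "b' \<in> \<O>" "d' \<in> \<O>" using A B by (auto simp: Iwa_iff)
  hence AB: "A \<cdot> B = M2 (a*a' + b*c') (a*b' + b*d') (pi * (y * a' + d * y')) (c*b' + d*d')"
    and entries: "a*a' + b*c' \<in> \<O>" "a*b' + b*d' \<in> \<O>" "y * a' + d * y' \<in> \<O>" "c*b' + d*d' \<in> \<O>"
    using A B by (auto simp: algebra_simps)
  have det: "det2 (A \<cdot> B) \<noteq> 0" "inverse (det2 (A \<cdot> B)) \<in> \<O>"
    using Iwa_det_unit[OF A(1)] Iwa_det_unit[OF B(1)] by (simp_all add: det2_mmul inverse_mult_distrib)
  show ?thesis unfolding AB by (rule Iwa_intro[OF entries(1,2,4,3) det[unfolded AB]])
qed

lemma Iwa_smul_unit: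
  assumes "u \<noteq> 0" "u \<in> \<O>" "inverse u \<in> \<O>" "A \<in> Iwa \<O> pi"
  shows "smul u A \<in> Iwa \<O> pi"
proof (cases A)
  case (M2 a b c d)
  obtain y where "y \<in> \<O>" "c = pi * y" "a \<in> \<O>" "b \<in> \<O>" "d \<in> \<O>" using assms M2 by (auto simp: Iwa_iff)
  hence uA: "smul u A = M2 (u * a) (u * b) (pi * (u * y)) (u * d)"
    and entries: "u * a \<in> \<O>" "u * b \<in> \<O>" "u * y \<in> \<O>" "u * d \<in> \<O>"
    using assms M2 by (simp_all add: mult.left_commute)
  have det: "det2 (smul u A) \<noteq> 0" "inverse (det2 (smul u A)) \<in> \<O>"
    using Iwa_det_unit[OF assms(4)] assms
    by (simp_all add: det2_smul inverse_mult_distrib flip: power_inverse)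
  show ?thesis unfolding uA by (rule Iwa_intro[OF entries(1,2,4,3) det[unfolded uA]])
qed

lemma Iwa_minv: "A \<in> Iwa \<O> pi \<Longrightarrow> minv A \<in> Iwa \<O> pi"
proof (cases A)
  case (M2 a b c d)
  assume A: "A \<in> Iwa \<O> pi"
  obtain y where "y \<in> \<O>" "c = pi * y" "a \<in> \<O>" "b \<in> \<O>" "d \<in> \<O>" using A M2 by (auto simp: Iwa_iff)
  hence "M2 d (- b) (- c) a \<in> Iwa \<O> pi"
    using Iwa_det_unit[OF A] M2 unfolding Iwa_iff by (auto simp: algebra_simps intro: bexI[of _ "- y"])
  hence "smul (inverse (det2 A)) (M2 d (- b) (- c) a) \<in> Iwa \<O> pi"
    using Iwa_det_unit[OF A] by (intro Iwa_smul_unit) simp_all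
  moreover have "minv A = smul (inverse (det2 A)) (M2 d (- b) (- c) a)"
    unfolding minv_def M2 by simp
  ultimately show ?thesis by (simp only:)
qed

lemma red_dent_mmul:
  assumes "A \<in> Iwa \<O> pi" "B \<in> Iwa \<O> pi"
  shows "red (dent (A \<cdot> B)) = red (dent A) * red (dent B)"
proof (cases A; cases B)
  fix a b c d a' b' c' d'
  assume A: "A = M2 a b c d" and B: "B = M2 a' b' c' d'"
  obtain y where "y \<in> \<O>" "c = pi * y" "d \<in> \<O>" using assms(1) A by (auto simp: Iwa_iff)
  moreover have "b' \<in> \<O>" "d' \<in> \<O>" using assms(2) B by (auto simp: Iwa_iff)
  ultimately show ?thesis using A B by simp
qed

lemma pi_powi_nonzero [simp]: "pi powi m \<noteq> 0"
  by (simp add: power_int_not_zero)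

lemma smul_pi_powi_in_IZ: "k \<in> Iwa \<O> pi \<Longrightarrow> smul (pi powi m) k \<in> IZ \<O> pi"
  unfolding IZ_def using pi_powi_nonzero by blast

lemma IZ_decomp:
  assumes "X \<in> IZ \<O> pi"
  obtains m k where "k \<in> Iwa \<O> pi" "X = smul (pi powi m) k"
proof -
  obtain z k where zk: "z \<noteq> 0" "k \<in> Iwa \<O> pi" "X = smul z k" using assms unfolding IZ_def by auto
  then obtain m u where u: "u \<in> \<O>" "inverse u \<in> \<O>" "z = pi powi m * u" using unit_times_pi_powi by blast
  have "smul u k \<in> Iwa \<O> pi" using u zk by (intro Iwa_smul_unit) auto
  moreover have "X = smul (pi powi m) (smul u k)" using zk u by (simp add: smul_smul)
  ultimately show ?thesis by (rule that)
qed

lemma smul_pi_powi_unit_det_imp_eq_0: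
  assumes "k \<in> Iwa \<O> pi" "det2 (smul (pi powi m) k) \<in> \<O>" "inverse (det2 (smul (pi powi m) k)) \<in> \<O>"
  shows "m = 0"
proof -
  have k: "det2 k \<noteq> 0" "det2 k \<in> \<O>" "inverse (det2 k) \<in> \<O>" using Iwa_det_unit[OF assms(1)] by auto
  have "pi powi (2 * m) = det2 (smul (pi powi m) k) * inverse (det2 k)"
    using k(1) by (simp add: det2_smul power_int_mult power2_eq_square mult.commute)
  hence "pi powi (2 * m) \<in> \<O>" "inverse (pi powi (2 * m)) \<in> \<O>"
    using assms(2,3) k by (simp_all add: inverse_mult_distrib)
  thus ?thesis using pi_powi_unit_imp_eq_0 by fastforce
qed

lemma smul_pi_powi_eq_iff:
  "smul (pi powi m) A = smul (pi powi m') B \<longleftrightarrow> A = smul (pi powi (m' - m)) B"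
proof -
  have "smul (pi powi m') B = smul (pi powi m) (smul (pi powi (m' - m)) B)"
    by (simp add: smul_smul flip: power_int_add)
  thus ?thesis by (simp add: smul_cancel_iff)
qed

lemma smul_pi_powi_Iwa_inj:
  assumes "k \<in> Iwa \<O> pi" "k' \<in> Iwa \<O> pi" "smul (pi powi m) k = smul (pi powi m') k'"
  shows "m = m' \<and> k = k'"
proof -
  have k': "k' = smul (pi powi (m - m')) k" using assms(3) smul_pi_powi_eq_iff by metis
  hence "m - m' = 0"
    using Iwa_det_unit[OF assms(2)] smul_pi_powi_unit_det_imp_eq_0[OF assms(1), of "m - m'"] by simp
  thus ?thesis using k' by simp
qed

lemma chi_smul_pi_powi: "k \<in> Iwa \<O> pi \<Longrightarrow> chi \<O> pi red r (smul (pi powi m) k) = red (dent k) ^ r"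
  unfolding chi_def
proof (rule the_equality)
  assume k: "k \<in> Iwa \<O> pi"
  thus "\<exists>m'. \<exists>k'\<in>Iwa \<O> pi. smul (pi powi m) k = smul (pi powi m') k' \<and> red (dent k) ^ r = red (dent k') ^ r"
    by blast
  fix v assume "\<exists>m'. \<exists>k'\<in>Iwa \<O> pi. smul (pi powi m) k = smul (pi powi m') k' \<and> v = red (dent k') ^ r"
  thus "v = red (dent k) ^ r" using smul_pi_powi_Iwa_inj[OF k] by blast
qed

lemma mmul_in_IZ_iff:
  assumes X: "X \<in> IZ \<O> pi" and R: "det2 R = 1"
  shows "X \<cdot> R \<in> IZ \<O> pi \<longleftrightarrow> R \<in> Iwa \<O> pi"
proof
  obtain m k where k: "k \<in> Iwa \<O> pi" "X = smul (pi powi m) k" using IZ_decomp[OF X] .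
  show "R \<in> Iwa \<O> pi" if XR: "X \<cdot> R \<in> IZ \<O> pi"
  proof -
    obtain m' k' where k': "k' \<in> Iwa \<O> pi" "X \<cdot> R = smul (pi powi m') k'" using IZ_decomp[OF XR] .
    have "k \<cdot> R = smul (pi powi (m' - m)) k'"
      using k k' by (simp add: smul_mmul smul_pi_powi_eq_iff)
    have "R = minv k \<cdot> (k \<cdot> R)"
      using minv_mmul[of k] Iwa_det_unit[OF k(1)] by (simp flip: mmul_assoc)
    also have "\<dots> = smul (pi powi (m' - m)) (minv k \<cdot> k')"
      unfolding \<open>k \<cdot> R = _\<close> by (simp add: mmul_smul)
    finally have "R = smul (pi powi (m' - m)) (minv k \<cdot> k')" .
    moreover have "minv k \<cdot> k' \<in> Iwa \<O> pi" using k k' by (intro Iwa_mmul Iwa_minv)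
    moreover from calculation have "m' - m = 0"
      using R by (intro smul_pi_powi_unit_det_imp_eq_0[of "minv k \<cdot> k'"]) simp_all
    ultimately show ?thesis by simp
  qed
  show "X \<cdot> R \<in> IZ \<O> pi" if "R \<in> Iwa \<O> pi"
    unfolding k(2) smul_mmul using k that by (intro smul_pi_powi_in_IZ Iwa_mmul)
qed

lemma chi_mmul_Iwa:
  assumes X: "X \<in> IZ \<O> pi" and R: "R \<in> Iwa \<O> pi"
  shows "chi \<O> pi red r (X \<cdot> R) = chi \<O> pi red r X * red (dent R) ^ r"
proof -
  obtain m k where k: "k \<in> Iwa \<O> pi" "X = smul (pi powi m) k" using IZ_decomp[OF X] .
  have "chi \<O> pi red r (X \<cdot> R) = red (dent (k \<cdot> R)) ^ r"
    unfolding k(2) smul_mmul using k R by (intro chi_smul_pi_powi Iwa_mmul)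
  also have "\<dots> = chi \<O> pi red r X * red (dent R) ^ r"
    unfolding k(2) using k R by (simp add: chi_smul_pi_powi red_dent_mmul power_mult_distrib)
  finally show ?thesis .
qed

lemma bracket_mmul_det_1:
  assumes "x \<cdot> H \<in> IZ \<O> pi" "det2 R = 1"
  shows "bracket \<O> pi red r (H \<cdot> R) x =
    (if R \<in> Iwa \<O> pi then chi \<O> pi red r (x \<cdot> H) * red (dent R) ^ r else 0)"
  using mmul_in_IZ_iff[OF assms] chi_mmul_Iwa[OF assms(1)]
  unfolding bracket_def by (simp add: mmul_assoc)

lemma id_in_IZ: "M2 1 0 0 1 \<in> IZ \<O> pi"
  using smul_pi_powi_in_IZ[OF id_in_Iwa, of 0] by simp

lemma chi_id: "chi \<O> pi red r (M2 1 0 0 1) = 1"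
  using chi_smul_pi_powi[OF id_in_Iwa, of r 0] by simp

end

section \<open>Kernels of the two Hecke operators\<close>

lemma sum_PiE_if_agree_below_last:
  fixes \<mu>0 :: "nat \<Rightarrow> 'b::finite"
  assumes n: "n \<ge> 1" and \<mu>0: "\<mu>0 \<in> PiE {..<n} (\<lambda>_. UNIV)"
  shows "(\<Sum>\<mu>\<in>PiE {..<n} (\<lambda>_. UNIV). if \<forall>j<n - 1. \<mu> j = \<mu>0 j then F \<mu> else 0) =
    (\<Sum>m\<in>UNIV. F (\<mu>0(n - 1 := m)))"
proof -
  define T where "T = {\<mu>\<in>PiE {..<n} (\<lambda>_. UNIV :: 'b set). \<forall>j<n - 1. \<mu> j = \<mu>0 j}"
  have restore: "\<mu>0(n - 1 := \<mu> (n - 1)) = \<mu>" if \<mu>: "\<mu> \<in> T" for \<mu>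
  proof
    fix j
    show "(\<mu>0(n - 1 := \<mu> (n - 1))) j = \<mu> j"
    proof (cases "j < n - 1")
      case False
      hence "j = n - 1 \<or> j \<notin> {..<n}" by auto
      thus ?thesis using \<mu> \<mu>0 unfolding T_def by (auto simp: PiE_iff extensional_def)
    qed (use \<mu> T_def in auto)
  qed
  have "(\<Sum>\<mu>\<in>PiE {..<n} (\<lambda>_. UNIV). if \<forall>j<n - 1. \<mu> j = \<mu>0 j then F \<mu> else 0) = (\<Sum>\<mu>\<in>T. F \<mu>)"
    by (simp add: sum.inter_filter[OF finite_PiE] T_def)
  also have "\<dots> = (\<Sum>m\<in>UNIV. F (\<mu>0(n - 1 := m)))"
    by (rule sum.reindex_bij_witness[of _ "\<lambda>m. \<mu>0(n - 1 := m)" "\<lambda>\<mu>. \<mu> (n - 1)"])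
      (use restore \<mu>0 n in \<open>auto simp: T_def PiE_iff extensional_def\<close>)
  finally show ?thesis .
qed

lemma prod_power_fun_upd_last:
  fixes n :: nat
  assumes "n \<ge> 1"
  shows "(\<Prod>j<n. (\<mu>0(n - 1 := m)) j ^ i j) = (\<Prod>j<n - 1. \<mu>0 j ^ i j) * (m::'a::comm_monoid_mult) ^ i (n - 1)"
proof -
  obtain n' where "n = Suc n'" using assms by (cases n) auto
  thus ?thesis by (simp add: mult.commute)
qed

lemma sum_if_mult_eq:
  fixes t0 e :: "'k::{field,finite}"
  shows "(\<Sum>t\<in>UNIV. if t * (1 - t0 * e) = t0 then W t else 0) =
    (if 1 - t0 * e = 0 then 0 else W (t0 / (1 - t0 * e)))"
proof (cases "1 - t0 * e = 0")
  case True
  hence "t0 \<noteq> 0" by auto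
  thus ?thesis using True by simp
next
  case False
  hence "(\<Sum>t\<in>UNIV. if t * (1 - t0 * e) = t0 then W t else 0) =
      (\<Sum>t\<in>UNIV. if t = t0 / (1 - t0 * e) then W t else 0)"
    by (intro sum.cong refl) (auto simp: field_simps)
  thus ?thesis using False by simp
qed

lemma Tm10_shape_mmul:
  fixes w P Z0 d u u0 :: "'b::field"
  assumes "w \<noteq> 0"
  shows "M2 (w * (Z0 + P * d)) ((Z0 + P * d) * u + P) w u =
    M2 (w * Z0) (Z0 * u0 + P) w u0 \<cdot> M2 (1 - u0 * d) ((u - u0 - u0 * u * d) / w) (w * d) (1 + u * d)"
    and "det2 (M2 (1 - u0 * d) ((u - u0 - u0 * u * d) / w) (w * d) (1 + u * d)) = 1"
proof -
  have "w * Z0 * ((u - u0 - u0 * u * d) / w) = Z0 * (u - u0 - u0 * u * d)"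
    "w * ((u - u0 - u0 * u * d) / w) = u - u0 - u0 * u * d"
    "(u - u0 - u0 * u * d) / w * (w * d) = (u - u0 - u0 * u * d) * d" using assms by simp_all
  thus "M2 (w * (Z0 + P * d)) ((Z0 + P * d) * u + P) w u =
    M2 (w * Z0) (Z0 * u0 + P) w u0 \<cdot> M2 (1 - u0 * d) ((u - u0 - u0 * u * d) / w) (w * d) (1 + u * d)"
    "det2 (M2 (1 - u0 * d) ((u - u0 - u0 * u * d) / w) (w * d) (1 + u * d)) = 1"
    by (simp_all add: algebra_simps)
qed

context padic_field
begin

definition tsum_delta :: "nat \<Rightarrow> (nat \<Rightarrow> 'k) \<Rightarrow> (nat \<Rightarrow> 'k) \<Rightarrow> 'a" where
  "tsum_delta n \<mu>0 \<mu> = (tsum n \<mu> - tsum n \<mu>0) / pi ^ (n - 1)"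

lemma tsum_eq_plus_delta: "tsum n \<mu> = tsum n \<mu>0 + pi ^ (n - 1) * tsum_delta n \<mu>0 \<mu>"
  unfolding tsum_delta_def by simp

lemma tsum_last: "n \<ge> 1 \<Longrightarrow> tsum n \<mu> = tsum (n - 1) \<mu> + pi ^ (n - 1) * tlift (\<mu> (n - 1))"
  using teich_sum_Suc[of "n - 1" \<mu>] by simp

lemma tsum_delta_in_O_iff:
  assumes "n \<ge> 1"
  shows "tsum_delta n \<mu>0 \<mu> \<in> \<O> \<longleftrightarrow> (\<forall>j<n - 1. \<mu> j = \<mu>0 j)"
proof -
  define D where "D = tsum (n - 1) \<mu> - tsum (n - 1) \<mu>0"
  define E where "E = tlift (\<mu> (n - 1)) - tlift (\<mu>0 (n - 1))"
  have E_in_O: "E \<in> \<O>" unfolding E_def by simp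
  have "tsum_delta n \<mu>0 \<mu> = D / pi ^ (n - 1) + E"
    unfolding tsum_delta_def D_def E_def tsum_last[OF assms, of \<mu>] tsum_last[OF assms, of \<mu>0]
    by (simp add: field_simps)
  hence "tsum_delta n \<mu>0 \<mu> \<in> \<O> \<longleftrightarrow> D / pi ^ (n - 1) \<in> \<O>"
    using E_in_O diff_in_O[of "tsum_delta n \<mu>0 \<mu>" E] by auto
  also have "\<dots> \<longleftrightarrow> (\<forall>j<n - 1. \<mu> j = \<mu>0 j)"
    unfolding D_def pi_pow_dvd_iff_divide_in_O[symmetric]
    using teich_sum_pi_pow_dvd_diff_imp_eq teich_sum_cong[of "n - 1" \<mu> \<mu>0] by auto
  finally show ?thesis .
qed

lemma red_tsum_delta:
  assumes "n \<ge> 1" "\<forall>j<n - 1. \<mu> j = \<mu>0 j"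
  shows "red (tsum_delta n \<mu>0 \<mu>) = \<mu> (n - 1) - \<mu>0 (n - 1)"
proof -
  have "tsum (n - 1) \<mu> = tsum (n - 1) \<mu>0" using teich_sum_cong assms(2) by blast
  hence "tsum_delta n \<mu>0 \<mu> = tlift (\<mu> (n - 1)) - tlift (\<mu>0 (n - 1))"
    unfolding tsum_delta_def tsum_last[OF assms(1), of \<mu>] tsum_last[OF assms(1), of \<mu>0]
    by (simp add: field_simps)
  thus ?thesis by simp
qed

lemma hecke_image_at_hit:
  fixes H :: "(nat \<Rightarrow> 'k) \<Rightarrow> 'k \<Rightarrow> 'a mat2" and R :: "(nat \<Rightarrow> 'k) \<Rightarrow> 'k \<Rightarrow> 'a mat2"
    and V :: "'k \<Rightarrow> 'k" and n :: nat and i :: "nat \<Rightarrow> nat"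
  assumes n: "n \<ge> 1" and \<mu>0: "\<mu>0 \<in> PiE {..<n} (\<lambda>_. UNIV)" and hit: "x \<cdot> H \<mu>0 t0 \<in> IZ \<O> pi"
    and H_eq: "\<And>\<mu> t. H \<mu> t = H \<mu>0 t0 \<cdot> R \<mu> t"
    and det_R: "\<And>\<mu> t. det2 (R \<mu> t) = 1"
    and fiber_sum: "\<And>\<mu>. (\<Sum>t\<in>UNIV. if R \<mu> t \<in> Iwa \<O> pi then red (dent (R \<mu> t)) ^ r else 0) =
      (if \<forall>j<n - 1. \<mu> j = \<mu>0 j then V (\<mu> (n - 1) - \<mu>0 (n - 1)) else 0)"
  shows "(\<Sum>\<mu>\<in>PiE {..<n} (\<lambda>_. UNIV). (\<Prod>j<n. \<mu> j ^ i j) * (\<Sum>t\<in>UNIV. bracket \<O> pi red r (H \<mu> t) x)) =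
    chi \<O> pi red r (x \<cdot> H \<mu>0 t0) * (\<Prod>j<n - 1. \<mu>0 j ^ i j) *
      (\<Sum>m\<in>UNIV. m ^ i (n - 1) * V (m - \<mu>0 (n - 1)))"
proof -
  define S where "S = PiE {..<n} (\<lambda>_. UNIV :: 'k set)"
  define c where "c = chi \<O> pi red r (x \<cdot> H \<mu>0 t0)"
  have "bracket \<O> pi red r (H \<mu> t) x = c * (if R \<mu> t \<in> Iwa \<O> pi then red (dent (R \<mu> t)) ^ r else 0)"
    for \<mu> t unfolding c_def by (subst H_eq) (simp add: bracket_mmul_det_1[OF hit det_R])
  hence "(\<Sum>\<mu>\<in>S. (\<Prod>j<n. \<mu> j ^ i j) * (\<Sum>t\<in>UNIV. bracket \<O> pi red r (H \<mu> t) x)) =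
      (\<Sum>\<mu>\<in>S. (\<Prod>j<n. \<mu> j ^ i j) * (c * (\<Sum>t\<in>UNIV. if R \<mu> t \<in> Iwa \<O> pi then red (dent (R \<mu> t)) ^ r else 0)))"
    by (simp add: sum_distrib_left)
  also have "\<dots> = c * (\<Sum>\<mu>\<in>S. if \<forall>j<n - 1. \<mu> j = \<mu>0 j then (\<Prod>j<n. \<mu> j ^ i j) * V (\<mu> (n - 1) - \<mu>0 (n - 1)) else 0)"
    unfolding fiber_sum by (auto simp: sum_distrib_left mult_ac intro!: sum.cong)
  also have "\<dots> = c * (\<Sum>m\<in>UNIV. (\<Prod>j<n. (\<mu>0(n - 1 := m)) j ^ i j) * V ((\<mu>0(n - 1 := m)) (n - 1) - \<mu>0 (n - 1)))"
    unfolding S_def sum_PiE_if_agree_below_last[OF n \<mu>0] ..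
  also have "\<dots> = c * (\<Sum>m\<in>UNIV. (\<Prod>j<n - 1. \<mu>0 j ^ i j) * m ^ i (n - 1) * V (m - \<mu>0 (n - 1)))"
    by (simp only: prod_power_fun_upd_last[OF n] fun_upd_same)
  finally show ?thesis unfolding S_def c_def by (simp add: sum_distrib_left mult_ac)
qed

lemma hecke_image_eq_0_iff:
  fixes H :: "(nat \<Rightarrow> 'k) \<Rightarrow> 'k \<Rightarrow> 'a mat2" and R :: "(nat \<Rightarrow> 'k) \<Rightarrow> 'k \<Rightarrow> (nat \<Rightarrow> 'k) \<Rightarrow> 'k \<Rightarrow> 'a mat2"
    and V :: "'k \<Rightarrow> 'k \<Rightarrow> 'k" and n :: nat and i :: "nat \<Rightarrow> nat"
  assumes n: "n \<ge> 1"
    and H_eq: "\<And>\<mu>0 t0 \<mu> t. H \<mu> t = H \<mu>0 t0 \<cdot> R \<mu>0 t0 \<mu> t"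
    and det_R: "\<And>\<mu>0 t0 \<mu> t. det2 (R \<mu>0 t0 \<mu> t) = 1"
    and det_H: "\<And>\<mu> t. det2 (H \<mu> t) \<noteq> 0"
    and fiber_sum: "\<And>\<mu>0 t0 \<mu>. (\<Sum>t\<in>UNIV. if R \<mu>0 t0 \<mu> t \<in> Iwa \<O> pi then red (dent (R \<mu>0 t0 \<mu> t)) ^ r else 0) =
      (if \<forall>j<n - 1. \<mu> j = \<mu>0 j then V t0 (\<mu> (n - 1) - \<mu>0 (n - 1)) else 0)"
  shows "(\<lambda>x. \<Sum>\<mu>\<in>PiE {..<n} (\<lambda>_. UNIV). (\<Prod>j<n. \<mu> j ^ i j) * (\<Sum>t\<in>UNIV. bracket \<O> pi red r (H \<mu> t) x)) = (\<lambda>_. 0)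
     \<longleftrightarrow> (\<forall>m0 t0. (\<Sum>m\<in>UNIV. m ^ i (n - 1) * V t0 (m - m0)) = 0)"
    (is "?image = (\<lambda>_. 0) \<longleftrightarrow> ?sums_vanish")
proof
  assume "?image = (\<lambda>_. 0)"
  show ?sums_vanish
  proof (intro allI)
    fix m0 t0 :: 'k
    \<comment> \<open>entries \<open>1\<close> below \<open>n - 1\<close> make the prefactor \<open>\<Prod>j<n - 1. \<mu>0 j ^ i j\<close> equal to \<open>1\<close>\<close>
    define \<mu>0 where "\<mu>0 = (\<lambda>j. if j < n - 1 then 1 else if j = n - 1 then m0 else undefined)"
    have \<mu>0_in: "\<mu>0 \<in> PiE {..<n} (\<lambda>_. UNIV)" unfolding \<mu>0_def using n by (auto simp: PiE_iff extensional_def)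
    have inv: "minv (H \<mu>0 t0) \<cdot> H \<mu>0 t0 = M2 1 0 0 1" by (rule minv_mmul[OF det_H])
    hence hit: "minv (H \<mu>0 t0) \<cdot> H \<mu>0 t0 \<in> IZ \<O> pi" using id_in_IZ by simp
    have "0 = ?image (minv (H \<mu>0 t0))" using fun_cong[OF \<open>?image = (\<lambda>_. 0)\<close>] by simp
    also have "\<dots> = (\<Sum>m\<in>UNIV. m ^ i (n - 1) * V t0 (m - m0))"
      using hecke_image_at_hit[OF n \<mu>0_in hit H_eq det_R fiber_sum]
      unfolding inv chi_id by (simp add: \<mu>0_def)
    finally show "(\<Sum>m\<in>UNIV. m ^ i (n - 1) * V t0 (m - m0)) = 0" ..
  qed
next
  assume ?sums_vanish
  show "?image = (\<lambda>_. 0)"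
  proof
    fix x
    show "?image x = 0"
    proof (cases "\<exists>\<mu>0\<in>PiE {..<n} (\<lambda>_. UNIV). \<exists>t0. x \<cdot> H \<mu>0 t0 \<in> IZ \<O> pi")
      case True
      then obtain \<mu>0 t0 where \<mu>0: "\<mu>0 \<in> PiE {..<n} (\<lambda>_. UNIV)" and hit: "x \<cdot> H \<mu>0 t0 \<in> IZ \<O> pi" by blast
      show ?thesis
        using hecke_image_at_hit[OF n \<mu>0 hit H_eq det_R fiber_sum] \<open>?sums_vanish\<close> by simp
    next
      case False
      thus ?thesis unfolding bracket_def by (intro sum.neutral) auto
    qed
  qed
qed

definition T12_matrix :: "nat \<Rightarrow> (nat \<Rightarrow> 'k) \<Rightarrow> 'k \<Rightarrow> 'a mat2" where
  "T12_matrix n \<mu> t = M2 (pi ^ n) (tsum n \<mu>) 0 1 \<cdot> beta pi \<cdot> M2 1 (tlift t) 0 1 \<cdot> wmat"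

definition T12_transition :: "nat \<Rightarrow> (nat \<Rightarrow> 'k) \<Rightarrow> 'k \<Rightarrow> (nat \<Rightarrow> 'k) \<Rightarrow> 'k \<Rightarrow> 'a mat2" where
  "T12_transition n \<mu>0 t0 \<mu> t = (let d = tsum_delta n \<mu>0 \<mu> in
     M2 (1 + tlift t * d) d (tlift t - tlift t0 - tlift t * tlift t0 * d) (1 - tlift t0 * d))"

lemma T12_matrix_eq:
  "n \<ge> 1 \<Longrightarrow> T12_matrix n \<mu> t = M2 (pi * pi ^ (n - 1) + tsum n \<mu> * pi * tlift t) (tsum n \<mu> * pi) (pi * tlift t) pi"
  unfolding T12_matrix_def beta_def wmat_def by (cases n) (simp_all add: algebra_simps)

lemma T12_matrix_mmul_transition:
  "n \<ge> 1 \<Longrightarrow> T12_matrix n \<mu> t = T12_matrix n \<mu>0 t0 \<cdot> T12_transition n \<mu>0 t0 \<mu> t"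
  unfolding T12_matrix_eq T12_transition_def Let_def tsum_eq_plus_delta[of n \<mu> \<mu>0]
  by (simp add: algebra_simps)

lemma det2_T12_transition: "det2 (T12_transition n \<mu>0 t0 \<mu> t) = 1"
  unfolding T12_transition_def Let_def by (simp add: algebra_simps)

lemma det2_T12_matrix: "n \<ge> 1 \<Longrightarrow> det2 (T12_matrix n \<mu> t) \<noteq> 0"
  unfolding T12_matrix_eq by (simp add: algebra_simps)

lemma T12_transition_in_Iwa_iff:
  assumes "n \<ge> 1"
  shows "T12_transition n \<mu>0 t0 \<mu> t \<in> Iwa \<O> pi \<longleftrightarrow>
    (\<forall>j<n - 1. \<mu> j = \<mu>0 j) \<and> t * (1 - t0 * (\<mu> (n - 1) - \<mu>0 (n - 1))) = t0"
proof -
  define d where "d = tsum_delta n \<mu>0 \<mu>"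
  define c where "c = tlift t - tlift t0 - tlift t * tlift t0 * d"
  have "T12_transition n \<mu>0 t0 \<mu> t = M2 (1 + tlift t * d) d c (1 - tlift t0 * d)"
    unfolding T12_transition_def Let_def d_def c_def ..
  hence "T12_transition n \<mu>0 t0 \<mu> t \<in> Iwa \<O> pi \<longleftrightarrow> d \<in> \<O> \<and> (\<exists>y\<in>\<O>. c = pi * y)"
    using Iwa_det_1_iff det2_T12_transition[of n \<mu>0 t0 \<mu> t] by auto
  also have "\<dots> \<longleftrightarrow> d \<in> \<O> \<and> red c = 0"
    using red_eq_0_iff[of c] unfolding c_def by fastforce
  also have "\<dots> \<longleftrightarrow> (\<forall>j<n - 1. \<mu> j = \<mu>0 j) \<and> t * (1 - t0 * (\<mu> (n - 1) - \<mu>0 (n - 1))) = t0"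
  proof (cases "\<forall>j<n - 1. \<mu> j = \<mu>0 j")
    case True
    hence "d \<in> \<O>" "red c = t - t0 - t * t0 * (\<mu> (n - 1) - \<mu>0 (n - 1))"
      using tsum_delta_in_O_iff[OF assms] red_tsum_delta[OF assms] by (simp_all add: c_def d_def)
    thus ?thesis using True by (auto simp: algebra_simps)
  qed (use tsum_delta_in_O_iff[OF assms] d_def in auto)
  finally show ?thesis .
qed

lemma red_dent_T12_transition:
  "n \<ge> 1 \<Longrightarrow> \<forall>j<n - 1. \<mu> j = \<mu>0 j \<Longrightarrow>
    red (dent (T12_transition n \<mu>0 t0 \<mu> t)) = 1 - t0 * (\<mu> (n - 1) - \<mu>0 (n - 1))"
  unfolding T12_transition_def Let_def using tsum_delta_in_O_iff red_tsum_delta by simp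

lemma T12_fiber_sum:
  assumes "n \<ge> 1" "r > 0"
  shows "(\<Sum>t\<in>UNIV. if T12_transition n \<mu>0 t0 \<mu> t \<in> Iwa \<O> pi
                     then red (dent (T12_transition n \<mu>0 t0 \<mu> t)) ^ r else 0) =
    (if \<forall>j<n - 1. \<mu> j = \<mu>0 j then (1 - t0 * (\<mu> (n - 1) - \<mu>0 (n - 1))) ^ r else 0)"
proof (cases "\<forall>j<n - 1. \<mu> j = \<mu>0 j")
  case True
  define e where "e = \<mu> (n - 1) - \<mu>0 (n - 1)"
  have "(\<Sum>t\<in>UNIV. if T12_transition n \<mu>0 t0 \<mu> t \<in> Iwa \<O> pi
                     then red (dent (T12_transition n \<mu>0 t0 \<mu> t)) ^ r else 0) =
      (\<Sum>t\<in>UNIV. if t * (1 - t0 * e) = t0 then (1 - t0 * e) ^ r else 0)"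
    unfolding T12_transition_in_Iwa_iff[OF assms(1)] red_dent_T12_transition[OF assms(1) True] e_def
    using True by simp
  also have "\<dots> = (1 - t0 * e) ^ r"
    using sum_if_mult_eq[of t0 e "\<lambda>_. (1 - t0 * e) ^ r"] assms(2) by simp
  finally show ?thesis using True unfolding e_def by simp
next
  case False
  thus ?thesis unfolding T12_transition_in_Iwa_iff[OF assms(1)]
    by (simp only: False simp_thms if_False sum.neutral_const)
qed

definition Tm10_matrix :: "nat \<Rightarrow> (nat \<Rightarrow> 'k) \<Rightarrow> 'k \<Rightarrow> 'a mat2" where
  "Tm10_matrix n \<mu> t = M2 (pi ^ (n - 1)) (tsum (n - 1) \<mu>) 0 1 \<cdot> M2 1 (tlift (\<mu> (n - 1))) 0 1 \<cdot> wmat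
     \<cdot> M2 pi (tlift t) 0 1"

definition Tm10_transition :: "nat \<Rightarrow> (nat \<Rightarrow> 'k) \<Rightarrow> 'k \<Rightarrow> (nat \<Rightarrow> 'k) \<Rightarrow> 'k \<Rightarrow> 'a mat2" where
  "Tm10_transition n \<mu>0 t0 \<mu> t = (let d = tsum_delta n \<mu>0 \<mu> in
     M2 (1 - tlift t0 * d) ((tlift t - tlift t0 - tlift t0 * tlift t * d) / pi) (pi * d) (1 + tlift t * d))"

lemma Tm10_matrix_eq:
  "n \<ge> 1 \<Longrightarrow> Tm10_matrix n \<mu> t = M2 (pi * tsum n \<mu>) (tsum n \<mu> * tlift t + pi ^ (n - 1)) pi (tlift t)"
  unfolding Tm10_matrix_def wmat_def tsum_last[of n \<mu>] by (simp add: algebra_simps)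

lemma Tm10_matrix_mmul_transition:
  "n \<ge> 1 \<Longrightarrow> Tm10_matrix n \<mu> t = Tm10_matrix n \<mu>0 t0 \<cdot> Tm10_transition n \<mu>0 t0 \<mu> t"
  unfolding Tm10_matrix_eq Tm10_transition_def Let_def tsum_eq_plus_delta[of n \<mu> \<mu>0]
  by (rule Tm10_shape_mmul(1)) simp

lemma det2_Tm10_transition: "det2 (Tm10_transition n \<mu>0 t0 \<mu> t) = 1"
  unfolding Tm10_transition_def Let_def by (rule Tm10_shape_mmul(2)) simp

lemma det2_Tm10_matrix: "n \<ge> 1 \<Longrightarrow> det2 (Tm10_matrix n \<mu> t) \<noteq> 0"
  unfolding Tm10_matrix_eq by (simp add: algebra_simps)

lemma Tm10_transition_in_Iwa_iff:
  assumes "n \<ge> 1"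
  shows "Tm10_transition n \<mu>0 t0 \<mu> t \<in> Iwa \<O> pi \<longleftrightarrow>
    (\<forall>j<n - 1. \<mu> j = \<mu>0 j) \<and> t * (1 - t0 * (\<mu> (n - 1) - \<mu>0 (n - 1))) = t0"
proof -
  define d where "d = tsum_delta n \<mu>0 \<mu>"
  define b where "b = tlift t - tlift t0 - tlift t0 * tlift t * d"
  have "Tm10_transition n \<mu>0 t0 \<mu> t = M2 (1 - tlift t0 * d) (b / pi) (pi * d) (1 + tlift t * d)"
    unfolding Tm10_transition_def Let_def d_def b_def by simp
  hence "Tm10_transition n \<mu>0 t0 \<mu> t \<in> Iwa \<O> pi \<longleftrightarrow> d \<in> \<O> \<and> b / pi \<in> \<O>"
    using Iwa_det_1_iff det2_Tm10_transition[of n \<mu>0 t0 \<mu> t] by auto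
  also have "\<dots> \<longleftrightarrow> d \<in> \<O> \<and> red b = 0"
    using pi_pow_dvd_iff_divide_in_O[of 1 b] pi_pow_dvd_1_iff[of b] by (auto simp: b_def)
  also have "\<dots> \<longleftrightarrow> (\<forall>j<n - 1. \<mu> j = \<mu>0 j) \<and> t * (1 - t0 * (\<mu> (n - 1) - \<mu>0 (n - 1))) = t0"
  proof (cases "\<forall>j<n - 1. \<mu> j = \<mu>0 j")
    case True
    hence "d \<in> \<O>" "red b = t - t0 - t0 * t * (\<mu> (n - 1) - \<mu>0 (n - 1))"
      using tsum_delta_in_O_iff[OF assms] red_tsum_delta[OF assms] by (simp_all add: b_def d_def)
    thus ?thesis using True by (auto simp: algebra_simps)
  qed (use tsum_delta_in_O_iff[OF assms] d_def in auto)
  finally show ?thesis .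
qed

lemma red_dent_Tm10_transition:
  "n \<ge> 1 \<Longrightarrow> \<forall>j<n - 1. \<mu> j = \<mu>0 j \<Longrightarrow>
    red (dent (Tm10_transition n \<mu>0 t0 \<mu> t)) = 1 + t * (\<mu> (n - 1) - \<mu>0 (n - 1))"
  unfolding Tm10_transition_def Let_def using tsum_delta_in_O_iff red_tsum_delta by simp

lemma Tm10_fiber_sum:
  assumes "n \<ge> 1" "0 < r" "r < CARD('k) - 1"
  shows "(\<Sum>t\<in>UNIV. if Tm10_transition n \<mu>0 t0 \<mu> t \<in> Iwa \<O> pi
                     then red (dent (Tm10_transition n \<mu>0 t0 \<mu> t)) ^ r else 0) =
    (if \<forall>j<n - 1. \<mu> j = \<mu>0 j then (1 - t0 * (\<mu> (n - 1) - \<mu>0 (n - 1))) ^ (CARD('k) - 1 - r) else 0)"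
proof (cases "\<forall>j<n - 1. \<mu> j = \<mu>0 j")
  case True
  define e where "e = \<mu> (n - 1) - \<mu>0 (n - 1)"
  have "(\<Sum>t\<in>UNIV. if Tm10_transition n \<mu>0 t0 \<mu> t \<in> Iwa \<O> pi
                     then red (dent (Tm10_transition n \<mu>0 t0 \<mu> t)) ^ r else 0) =
      (\<Sum>t\<in>UNIV. if t * (1 - t0 * e) = t0 then (1 + t * e) ^ r else 0)"
    unfolding Tm10_transition_in_Iwa_iff[OF assms(1)] red_dent_Tm10_transition[OF assms(1) True] e_def
    using True by simp
  also have "\<dots> = inverse (1 - t0 * e) ^ r"
  proof (cases "1 - t0 * e = 0")
    case False
    hence "1 + t0 / (1 - t0 * e) * e = inverse (1 - t0 * e)" by (simp add: field_simps)
    thus ?thesis using sum_if_mult_eq[of t0 e "\<lambda>t. (1 + t * e) ^ r"] False by simp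
  qed (use sum_if_mult_eq[of t0 e "\<lambda>t. (1 + t * e) ^ r"] assms(2) in simp)
  finally show ?thesis
    using True inverse_power_eq_power_card_minus[OF assms(2,3)] unfolding e_def by simp
next
  case False
  thus ?thesis unfolding Tm10_transition_in_Iwa_iff[OF assms(1)]
    by (simp only: False simp_thms if_False sum.neutral_const)
qed

lemma T12_comb_eq_0_iff:
  assumes "0 < r" "n \<ge> 1"
  shows "T12_comb \<O> pi red r (PiE {..<n} (\<lambda>_. UNIV)) (\<lambda>\<mu>. \<Prod>j<n. \<mu> j ^ i j)
        (\<lambda>\<mu>. M2 (pi ^ n) (tsum n \<mu>) 0 1) = (\<lambda>_. 0)
     \<longleftrightarrow> (\<forall>m0 t0::'k. (\<Sum>m\<in>UNIV. m ^ i (n - 1) * (1 - t0 * (m - m0)) ^ r) = 0)"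
proof -
  have eq: "T12_comb \<O> pi red r (PiE {..<n} (\<lambda>_. UNIV)) (\<lambda>\<mu>. \<Prod>j<n. \<mu> j ^ i j)
        (\<lambda>\<mu>. M2 (pi ^ n) (tsum n \<mu>) 0 1) =
     (\<lambda>x. \<Sum>\<mu>\<in>PiE {..<n} (\<lambda>_. UNIV). (\<Prod>j<n. \<mu> j ^ i j) * (\<Sum>t\<in>UNIV. bracket \<O> pi red r (T12_matrix n \<mu> t) x))"
    unfolding T12_comb_def T12_matrix_def ..
  show ?thesis unfolding eq
    by (rule hecke_image_eq_0_iff[where H = "T12_matrix n" and R = "T12_transition n",
          OF assms(2) T12_matrix_mmul_transition[OF assms(2)] det2_T12_transition
          det2_T12_matrix[OF assms(2)] T12_fiber_sum[OF assms(2,1)]])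
qed

lemma Tm10_comb_eq_0_iff:
  assumes "0 < r" "r < CARD('k) - 1" "n \<ge> 1"
  shows "Tm10_comb \<O> pi red r (PiE {..<n} (\<lambda>_. UNIV)) (\<lambda>\<mu>. \<Prod>j<n. \<mu> j ^ i j)
        (\<lambda>\<mu>. M2 (pi ^ (n - 1)) (tsum (n - 1) \<mu>) 0 1 \<cdot> M2 1 (tlift (\<mu> (n - 1))) 0 1 \<cdot> wmat) = (\<lambda>_. 0)
     \<longleftrightarrow> (\<forall>m0 t0::'k. (\<Sum>m\<in>UNIV. m ^ i (n - 1) * (1 - t0 * (m - m0)) ^ (CARD('k) - 1 - r)) = 0)"
proof -
  have eq: "Tm10_comb \<O> pi red r (PiE {..<n} (\<lambda>_. UNIV)) (\<lambda>\<mu>. \<Prod>j<n. \<mu> j ^ i j)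
        (\<lambda>\<mu>. M2 (pi ^ (n - 1)) (tsum (n - 1) \<mu>) 0 1 \<cdot> M2 1 (tlift (\<mu> (n - 1))) 0 1 \<cdot> wmat) =
     (\<lambda>x. \<Sum>\<mu>\<in>PiE {..<n} (\<lambda>_. UNIV). (\<Prod>j<n. \<mu> j ^ i j) * (\<Sum>t\<in>UNIV. bracket \<O> pi red r (Tm10_matrix n \<mu> t) x))"
    unfolding Tm10_comb_def Tm10_matrix_def ..
  show ?thesis unfolding eq
    by (rule hecke_image_eq_0_iff[where H = "Tm10_matrix n" and R = "Tm10_transition n",
          OF assms(3) Tm10_matrix_mmul_transition[OF assms(3)] det2_Tm10_transition
          det2_Tm10_matrix[OF assms(3)] Tm10_fiber_sum[OF assms(3,1,2)]])
qed

end

theorem lemma3p6: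
  fixes \<O> :: "'a::field_char_0 set" and pi :: 'a and red :: "'a \<Rightarrow> 'k::{field,finite}"
    and p f r n :: nat and i :: "nat \<Rightarrow> nat"
  assumes F: "padic_setup \<O> pi red p f"
    and r: "0 < r" "r < CARD('k) - 1"
    and n: "n \<ge> 1"
    and i: "\<forall>j<n. i j \<le> CARD('k) - 1"
  shows
    "(T12_comb \<O> pi red r (PiE {..<n} (\<lambda>_. UNIV))
        (\<lambda>mu. \<Prod>j<n. mu j ^ i j)
        (\<lambda>mu. M2 (pi ^ n) (teich_sum \<O> pi red n mu) 0 1) = (\<lambda>_. 0)
      \<longleftrightarrow> (i (n - 1) \<le> CARD('k) - 2 - r \<or>
           (i (n - 1) > CARD('k) - 1 - r \<and>
            (\<exists>j. j + 1 < f \<and> digit p (i (n - 1)) j < p - 1 - digit p r j))))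
   \<and>
    (Tm10_comb \<O> pi red r (PiE {..<n} (\<lambda>_. UNIV))
        (\<lambda>mu. \<Prod>j<n. mu j ^ i j)
        (\<lambda>mu. M2 (pi ^ (n - 1)) (teich_sum \<O> pi red (n - 1) mu) 0 1
              \<cdot> M2 1 (teich \<O> red (mu (n - 1))) 0 1 \<cdot> wmat) = (\<lambda>_. 0)
      \<longleftrightarrow> (i (n - 1) \<le> r - 1 \<or>
           (i (n - 1) > r \<and> (\<exists>j. j + 1 < f \<and> digit p (i (n - 1)) j < digit p r j))))"
proof -
  interpret padic_field \<O> pi red p f by (rule padic_field.intro[OF F])
  have i_last: "i (n - 1) \<le> CARD('k) - 1" using i n by simp
  have r': "CARD('k) - 1 - r < CARD('k) - 1" using r by simp
  note vanish = character_sum_vanishes_iff_digits[OF card_residue_field prime_p _ i_last]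
  show ?thesis
    unfolding T12_comb_eq_0_iff[OF r(1) n] Tm10_comb_eq_0_iff[OF r n] vanish[OF r(2)] vanish[OF r']
    using digit_sum_condition_iff[of r p f "i (n - 1)"] complement_digit_sum_condition_iff[of r p f "i (n - 1)"]
      r i_last card_residue_field by simp
qed

end
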